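(* Let $|\psi\rangle_{AB}$ and $|\varphi\rangle_{AB}$ be pure states on finite-dimensional registers $A,B$, let $\rho_A=\mathrm{Tr}_B|\psi\rangle\langle\psi|$ and $\sigma_A=\mathrm{Tr}_B|\varphi\rangle\langle\varphi|$, let $\eta\ge 0$, and let $W=\mathrm{sgn}_\eta(\mathrm{Tr}_A(|\varphi\rangle\langle\psi|))$ be the canonical Uhlmann partial isometry with cutoff $\eta$ for $(|\psi\rangle,|\varphi\rangle)$. Then: (1) $W$ is a partial isometry on $B$; (2) $|\langle\varphi|(\mathrm{id}_A\otimes W)|\psi\rangle|^2\ \ge\ \mathrm{F}(\rho_A,\sigma_A)-2\eta\dim(B)$; (3) (minimality) for every partial isometry $R$ on $B$ with $\mathrm{F}(\rho_A,\sigma_A)=|\langle\varphi|(\mathrm{id}_A\otimes R)|\psi\rangle|^2$, we have $W^\dagger W\le R^\dagger R$ in the positive semidefinite order.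
   Context: Fidelity is $\mathrm{F}(\rho,\sigma)=\|\sqrt{\rho}\sqrt{\sigma}\|_1^2$ (squared convention). A linear map $U:A\to B$ is a partial isometry if $U=\tilde U\Pi$ for a projector $\Pi$ on $A$ and an isometry $\tilde U$. For $\eta\ge 0$ and an operator $K$ with singular value decomposition $K=U\Sigma V^\dagger$, define $\mathrm{sgn}_\eta(K)=U\,\mathrm{sgn}_\eta(\Sigma)V^\dagger$, where $\mathrm{sgn}_\eta(\Sigma)$ is the projector onto the span of the eigenvectors of $\Sigma$ with eigenvalue strictly greater than $\eta$. The canonical Uhlmann partial isometry with cutoff $\eta$ for a pair of pure states $(|\psi\rangle_{AB},|\varphi\rangle_{AB})$ is the operator $\mathrm{sgn}_\eta(\mathrm{Tr}_A(|\varphi\rangle\langle\psi|))$ on $B$. *)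

theory Defs
  imports Complex_Main
begin

text \<open>Registers are finite types; a vector on register 'i is a function 'i \<Rightarrow> complex;
  an operator from register 'j to register 'i is a matrix M :: 'i \<Rightarrow> 'j \<Rightarrow> complex
  (entry M i j = row i, column j) with respect to the computational bases.
  The bipartite register AB is the product type 'a \<times> 'b.\<close>

type_synonym ('i, 'j) cmat = "'i \<Rightarrow> 'j \<Rightarrow> complex"

definition mmult :: "('i, 'j::finite) cmat \<Rightarrow> ('j, 'k) cmat \<Rightarrow> ('i, 'k) cmat" (infixl "**" 70) where
  "M ** N = (\<lambda>i k. \<Sum>j\<in>UNIV. M i j * N j k)"

definition adj :: "('i, 'j) cmat \<Rightarrow> ('j, 'i) cmat" where
  "adj M = (\<lambda>i j. cnj (M j i))"

definition idm :: "('i, 'i) cmat" where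
  "idm = (\<lambda>i j. if i = j then 1 else 0)"

definition mtrace :: "('i::finite, 'i) cmat \<Rightarrow> complex" where
  "mtrace M = (\<Sum>i\<in>UNIV. M i i)"

definition psd :: "('i::finite, 'i) cmat \<Rightarrow> bool" where
  "psd M \<longleftrightarrow> (\<forall>v::'i \<Rightarrow> complex.
      let q = (\<Sum>i\<in>UNIV. \<Sum>j\<in>UNIV. cnj (v i) * M i j * v j) in Im q = 0 \<and> Re q \<ge> 0)"

definition psd_le :: "('i::finite, 'i) cmat \<Rightarrow> ('i, 'i) cmat \<Rightarrow> bool" where
  "psd_le M N \<longleftrightarrow> psd (\<lambda>i j. N i j - M i j)"

definition msqrt :: "('i::finite, 'i) cmat \<Rightarrow> ('i, 'i) cmat" where
  "msqrt M = (THE S. psd S \<and> S ** S = M)"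

definition trace_norm :: "('i::finite, 'j::finite) cmat \<Rightarrow> real" where
  "trace_norm K = Re (mtrace (msqrt (adj K ** K)))"

text \<open>Fidelity, squared convention.\<close>
definition fidelity :: "('i::finite, 'i) cmat \<Rightarrow> ('i, 'i) cmat \<Rightarrow> real" where
  "fidelity \<rho> \<sigma> = (trace_norm (msqrt \<rho> ** msqrt \<sigma>)) ^ 2"

definition isometry :: "('i::finite, 'j::finite) cmat \<Rightarrow> bool" where
  "isometry U \<longleftrightarrow> adj U ** U = idm"

definition unitary :: "('i::finite, 'i) cmat \<Rightarrow> bool" where
  "unitary U \<longleftrightarrow> adj U ** U = idm \<and> U ** adj U = idm"

definition projector :: "('i::finite, 'i) cmat \<Rightarrow> bool" where
  "projector P \<longleftrightarrow> adj P = P \<and> P ** P = P"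

definition partial_isometry :: "('i::finite, 'j::finite) cmat \<Rightarrow> bool" where
  "partial_isometry U \<longleftrightarrow> (\<exists>(Ut :: ('i, 'j) cmat) P. isometry Ut \<and> projector P \<and> U = Ut ** P)"

definition is_svd :: "('i::finite, 'i) cmat \<Rightarrow> ('i, 'i) cmat \<Rightarrow> ('i, 'i) cmat \<Rightarrow> ('i, 'i) cmat \<Rightarrow> bool" where
  "is_svd K U S V \<longleftrightarrow> unitary U \<and> unitary V
     \<and> (\<forall>i j. i \<noteq> j \<longrightarrow> S i j = 0) \<and> (\<forall>i. Im (S i i) = 0 \<and> Re (S i i) \<ge> 0)
     \<and> K = U ** S ** adj V"

definition sgn_eta :: "real \<Rightarrow> ('i::finite, 'i) cmat \<Rightarrow> ('i, 'i) cmat" where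
  "sgn_eta \<eta> K = (SOME W. \<exists>U S V. is_svd K U S V \<and>
      W = U ** (\<lambda>i j. if i = j \<and> Re (S i i) > \<eta> then 1 else 0) ** adj V)"

definition pure_state :: "('i::finite \<Rightarrow> complex) \<Rightarrow> bool" where
  "pure_state \<psi> \<longleftrightarrow> (\<Sum>x\<in>UNIV. (cmod (\<psi> x))\<^sup>2) = 1"

definition ketbra :: "('i \<Rightarrow> complex) \<Rightarrow> ('j \<Rightarrow> complex) \<Rightarrow> ('i, 'j) cmat" where
  "ketbra \<phi> \<psi> = (\<lambda>i j. \<phi> i * cnj (\<psi> j))"

definition ptrace_B :: "('a \<times> 'b::finite, 'a \<times> 'b) cmat \<Rightarrow> ('a, 'a) cmat" where
  "ptrace_B M = (\<lambda>a a'. \<Sum>b\<in>UNIV. M (a, b) (a', b))"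

definition ptrace_A :: "('a::finite \<times> 'b, 'a \<times> 'b) cmat \<Rightarrow> ('b, 'b) cmat" where
  "ptrace_A M = (\<lambda>b b'. \<Sum>a\<in>UNIV. M (a, b) (a, b'))"

definition id_tensor :: "('b, 'b) cmat \<Rightarrow> ('a \<times> 'b, 'a \<times> 'b) cmat" where
  "id_tensor R = (\<lambda>(a, b) (a', b'). if a = a' then R b b' else 0)"

definition sandwich :: "('i::finite \<Rightarrow> complex) \<Rightarrow> ('i, 'j::finite) cmat \<Rightarrow> ('j \<Rightarrow> complex) \<Rightarrow> complex" where
  "sandwich \<phi> M \<psi> = (\<Sum>i\<in>UNIV. \<Sum>j\<in>UNIV. cnj (\<phi> i) * M i j * \<psi> j)"

end

theory Submission imports Defs "HOL-Analysis.Analysis" begin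

text \<open>Read the bipartite vectors as \<open>A \<times> B\<close> matrices \<open>\<Psi>, \<Phi>\<close>. Then \<open>\<rho> = \<Psi>\<Psi>\<^sup>\<dagger>\<close>, \<open>\<sigma> = \<Phi>\<Phi>\<^sup>\<dagger>\<close>, and
  \<open>K = Tr\<^sub>A |\<phi>\<rangle>\<langle>\<psi>|\<close> is the entrywise conjugate of \<open>\<Phi>\<^sup>\<dagger>\<Psi>\<close>, so \<open>\<surd>F(\<rho>,\<sigma>) = \<parallel>\<surd>\<rho>\<surd>\<sigma>\<parallel>\<^sub>1 = \<parallel>K\<parallel>\<^sub>1 = \<Sigma> s\<^sub>i\<close>
  for a singular value decomposition \<open>K = U diag(s) V\<^sup>\<dagger>\<close>. For every \<open>R\<close> on \<open>B\<close>,
  \<open>\<langle>\<phi>|(id \<otimes> R)|\<psi>\<rangle> = Tr(R K\<^sup>\<dagger>) = \<Sigma> s\<^sub>i \<langle>u\<^sub>i, R v\<^sub>i\<rangle>\<close>. For \<open>W = U diag(1[s\<^sub>i > \<eta>]) V\<^sup>\<dagger>\<close> this is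
  \<open>\<Sigma> {s\<^sub>i | s\<^sub>i > \<eta>} \<ge> \<Sigma> s\<^sub>i - \<eta> dim B\<close>, and \<open>\<Sigma> s\<^sub>i \<le> 1\<close> turns this into the fidelity bound. If a
  partial isometry \<open>R\<close> attains \<open>\<Sigma> s\<^sub>i\<close>, every term with \<open>s\<^sub>i > 0\<close> has \<open>|\<langle>u\<^sub>i, R v\<^sub>i\<rangle>| = 1\<close>, which forces
  \<open>R\<^sup>\<dagger>R v\<^sub>i = v\<^sub>i\<close>; that is \<open>W\<^sup>\<dagger>W \<le> R\<^sup>\<dagger>R\<close>.\<close>

no_notation matrix_matrix_mult (infixl "**" 70)

section \<open>Vectors and matrices over a finite index type\<close>

definition cinner :: "('n::finite \<Rightarrow> complex) \<Rightarrow> ('n \<Rightarrow> complex) \<Rightarrow> complex" where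
  "cinner x y = (\<Sum>i\<in>UNIV. cnj (x i) * y i)"

definition mvec :: "('i, 'j::finite) cmat \<Rightarrow> ('j \<Rightarrow> complex) \<Rightarrow> ('i \<Rightarrow> complex)" where
  "mvec M x = (\<lambda>i. \<Sum>j\<in>UNIV. M i j * x j)"

definition vnorm2 :: "('n::finite \<Rightarrow> complex) \<Rightarrow> real" where
  "vnorm2 x = (\<Sum>i\<in>UNIV. (cmod (x i))\<^sup>2)"

definition diag :: "('n \<Rightarrow> real) \<Rightarrow> ('n,'n) cmat" where
  "diag d = (\<lambda>i j. if i = j then complex_of_real (d i) else 0)"

definition cols :: "('j \<Rightarrow> 'i \<Rightarrow> complex) \<Rightarrow> ('i,'j) cmat" where
  "cols u = (\<lambda>i j. u j i)"

definition mconj :: "('i,'j) cmat \<Rightarrow> ('i,'j) cmat" where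
  "mconj A = (\<lambda>i j. cnj (A i j))"

lemma mmult_assoc: "((A::('i,'j::finite) cmat) ** (B::('j,'k::finite) cmat)) ** C = A ** (B ** C)"
  unfolding mmult_def
  by (auto simp: sum_distrib_left sum_distrib_right mult.assoc intro!: ext sum.swap)

lemma adj_mmult: "adj ((A::('i,'j::finite) cmat) ** B) = adj B ** adj A"
  unfolding mmult_def adj_def by (auto intro!: ext simp: mult.commute)

lemma adj_adj[simp]: "adj (adj A) = A"
  unfolding adj_def by auto

lemma adj_idm[simp]: "adj idm = idm"
  unfolding adj_def idm_def by (auto intro!: ext)

lemma idm_mmult[simp]: "idm ** (A::('i::finite,'j) cmat) = A"
  unfolding mmult_def idm_def
  by (auto intro!: ext simp: if_distrib[where f="\<lambda>x. x * _"] cong: if_cong)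

lemma mmult_idm[simp]: "(A::('i,'j::finite) cmat) ** idm = A"
  unfolding mmult_def idm_def
  by (auto intro!: ext simp: if_distrib[where f="\<lambda>x. _ * x"] cong: if_cong)

lemma adj_diff: "adj (\<lambda>i j. A i j - B i j) = (\<lambda>i j. adj A i j - adj B i j)"
  unfolding adj_def by auto

lemma mmult_diff_left: "(\<lambda>i j. A i j - B i j) ** C = (\<lambda>i j. (A ** C) i j - (B ** C) i j)"
  unfolding mmult_def by (auto intro!: ext simp: algebra_simps sum_subtractf)

lemma mmult_diff_right: "C ** (\<lambda>i j. A i j - B i j) = (\<lambda>i j. (C ** A) i j - (C ** B) i j)"
  unfolding mmult_def by (auto intro!: ext simp: algebra_simps sum_subtractf)

lemma mtrace_comm: "mtrace ((A::('i::finite,'j::finite) cmat) ** B) = mtrace (B ** A)"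
  unfolding mtrace_def mmult_def by (subst sum.swap) (auto simp: mult.commute)

lemma mtrace_diff: "mtrace (\<lambda>i j. A i j - B i j) = mtrace A - mtrace B"
  unfolding mtrace_def by (simp add: sum_subtractf)

lemma mmult_diag: "A ** diag d = (\<lambda>i j. A i j * complex_of_real (d j))"
  unfolding mmult_def diag_def
  by (auto intro!: ext simp: if_distrib[where f="\<lambda>x. _ * x"] cong: if_cong)

lemma diag_mmult_diag: "diag a ** diag b = diag (\<lambda>i. a i * b i)"
  unfolding mmult_diag by (auto intro!: ext simp: diag_def)

lemma adj_diag[simp]: "adj (diag d) = diag d"
  unfolding adj_def diag_def by (auto intro!: ext)

lemma diag_1: "diag (\<lambda>_. 1) = idm"
  unfolding diag_def idm_def by (auto intro!: ext)

lemma mtrace_mmult_diag: "mtrace (A ** diag d) = (\<Sum>i\<in>UNIV. A i i * complex_of_real (d i))"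
  unfolding mtrace_def mmult_diag ..

lemma mtrace_diag: "mtrace (diag d) = complex_of_real (\<Sum>i\<in>UNIV. d i)"
  unfolding mtrace_def diag_def of_real_sum by simp

lemma mvec_mmult: "mvec (A ** B) x = mvec A (mvec B x)"
  unfolding mvec_def mmult_def
  by (auto intro!: ext simp: sum_distrib_left sum_distrib_right mult.assoc intro: sum.swap)

lemma mvec_lin: "mvec M (\<lambda>i. x i + s * w i) = (\<lambda>i. mvec M x i + s * mvec M w i)"
  unfolding mvec_def by (auto intro!: ext simp: algebra_simps sum.distrib sum_distrib_left)

lemma mvec_scale: "mvec M (\<lambda>i. s * w i) = (\<lambda>i. s * mvec M w i)"
  unfolding mvec_def by (auto intro!: ext simp: algebra_simps sum_distrib_left)

lemma mvec_diff: "mvec (\<lambda>i j. A i j - B i j) x = (\<lambda>i. mvec A x i - mvec B x i)"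
  unfolding mvec_def by (auto intro!: ext simp: algebra_simps sum_subtractf)

lemma mvec_vdiff: "mvec M (\<lambda>i. x i - y i) = (\<lambda>i. mvec M x i - mvec M y i)"
  unfolding mvec_def by (auto intro!: ext simp: algebra_simps sum_subtractf)

lemma mvec_diag: "mvec (diag g) w = (\<lambda>i. complex_of_real (g i) * w i)"
  unfolding mvec_def diag_def
  by (auto intro!: ext simp: if_distrib[where f="\<lambda>x. x * _"] cong: if_cong)

lemma mvec_idm[simp]: "mvec idm x = x"
  unfolding mvec_def idm_def by (auto intro!: ext simp: if_distrib[where f="\<lambda>z. z * _"] cong: if_cong)

lemma cinner_commute: "cinner y x = cnj (cinner x y)"
  unfolding cinner_def by (auto simp: mult.commute)

lemma cinner_adj: "cinner x (mvec A y) = cinner (mvec (adj A) x) y"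
  unfolding cinner_def mvec_def adj_def
  by (auto simp: sum_distrib_left sum_distrib_right mult_ac intro: sum.swap)

lemma hermitian_cinner: "adj H = H \<Longrightarrow> cinner x (mvec H y) = cinner (mvec H x) y"
  by (metis cinner_adj)

lemma cinner_mvec_mvec: "cinner (mvec K x) (mvec K y) = cinner x (mvec (adj K ** K) y)"
  by (simp add: mvec_mmult cinner_adj)

lemma cinner_expand:
  "cinner (\<lambda>i. a i + s * b i) (\<lambda>i. c i + t * d i)
    = cinner a c + t * cinner a d + cnj s * cinner b c + cnj s * t * cinner b d"
  unfolding cinner_def by (simp add: algebra_simps sum.distrib sum_distrib_left)

lemma cinner_lin_right: "cinner x (\<lambda>i. y i + t * z i) = cinner x y + t * cinner x z"
  unfolding cinner_def by (simp add: algebra_simps sum.distrib sum_distrib_left)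

lemma cinner_scale_right: "cinner x (\<lambda>i. c * y i) = c * cinner x y"
  unfolding cinner_def by (simp add: algebra_simps sum_distrib_left)

lemma cinner_scale_left: "cinner (\<lambda>i. c * x i) y = cnj c * cinner x y"
  unfolding cinner_def by (simp add: algebra_simps sum_distrib_left)

lemma cinner_diff_right: "cinner x (\<lambda>i. y i - z i) = cinner x y - cinner x z"
  unfolding cinner_def by (simp add: algebra_simps sum_subtractf)

lemma cnj_mult_self: "cnj z * z = complex_of_real ((cmod z)\<^sup>2)"
  by (metis complex_norm_square mult.commute)

lemma cinner_self: "cinner x x = complex_of_real (vnorm2 x)"
  unfolding cinner_def vnorm2_def of_real_sum cnj_mult_self ..

lemma vnorm2_nonneg: "vnorm2 x \<ge> 0"
  unfolding vnorm2_def by (auto intro: sum_nonneg)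

lemma vnorm2_eq_0: "vnorm2 x = 0 \<longleftrightarrow> x = (\<lambda>_. 0)"
  unfolding vnorm2_def by (subst sum_nonneg_eq_0_iff) (auto intro!: ext)

lemma vnorm2_pos: "x \<noteq> (\<lambda>_. 0) \<Longrightarrow> vnorm2 x > 0"
  using vnorm2_eq_0 vnorm2_nonneg by (metis less_eq_real_def)

lemma vnorm2_scale: "vnorm2 (\<lambda>i. c * x i) = (cmod c)\<^sup>2 * vnorm2 x"
  unfolding vnorm2_def by (simp add: norm_mult power_mult_distrib sum_distrib_left)

lemma cinner_diag: "cinner w (mvec (diag g) w) = complex_of_real (\<Sum>k\<in>UNIV. g k * (cmod (w k))\<^sup>2)"
  unfolding mvec_diag cinner_def of_real_sum by (simp add: mult.left_commute[of "cnj _"] cnj_mult_self)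

lemma cmod_cinner_le_mean_vnorm2: "cmod (cinner x y) \<le> (vnorm2 x + vnorm2 y) / 2"
proof -
  have "cmod (cinner x y) \<le> (\<Sum>i\<in>UNIV. cmod (cnj (x i) * y i))"
    unfolding cinner_def by (rule norm_sum)
  also have "\<dots> \<le> (\<Sum>i\<in>UNIV. ((cmod (x i))\<^sup>2 + (cmod (y i))\<^sup>2) / 2)"
  proof (rule sum_mono)
    fix i
    have "0 \<le> (cmod (x i) - cmod (y i))\<^sup>2" by simp
    thus "cmod (cnj (x i) * y i) \<le> ((cmod (x i))\<^sup>2 + (cmod (y i))\<^sup>2) / 2"
      by (simp add: norm_mult power2_eq_square algebra_simps)
  qed
  also have "\<dots> = (vnorm2 x + vnorm2 y) / 2"
    unfolding vnorm2_def by (simp only: sum.distrib flip: sum_divide_distrib)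
  finally show ?thesis .
qed

lemma adj_mmult_cinner: "(adj A ** B) i j = cinner (\<lambda>k. A k i) (\<lambda>k. B k j)"
  unfolding mmult_def adj_def cinner_def by simp

lemma isometry_vnorm2: "adj M ** M = idm \<Longrightarrow> vnorm2 (mvec M x) = vnorm2 x"
  by (metis cinner_mvec_mvec cinner_self mvec_idm of_real_eq_iff)

lemma mtrace_adj_mult_self_eq_0: "mtrace (adj Q ** Q) = 0 \<Longrightarrow> Q = (\<lambda>_ _. 0)"
proof -
  assume "mtrace (adj Q ** Q) = 0"
  hence "(\<Sum>j\<in>UNIV. vnorm2 (\<lambda>k. Q k j)) = 0"
    unfolding mtrace_def adj_mmult_cinner cinner_self by (metis of_real_eq_0_iff of_real_sum)
  hence "vnorm2 (\<lambda>k. Q k j) = 0" for j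
    by (subst (asm) sum_nonneg_eq_0_iff) (auto intro: vnorm2_nonneg)
  thus ?thesis unfolding vnorm2_eq_0 by (metis ext)
qed

lemma linear_le_quadratic_imp_zero:
  fixes a b :: real
  assumes "\<And>s. a * s \<le> b * s\<^sup>2" shows "a = 0"
proof (rule ccontr)
  assume a: "a \<noteq> 0"
  define s where "s = a / (2 * (\<bar>b\<bar> + 1))"
  have pos: "2 * (\<bar>b\<bar> + 1) > 0" by simp
  have "a * s = a\<^sup>2 / (2 * (\<bar>b\<bar> + 1))" unfolding s_def by (simp add: power2_eq_square)
  moreover have "b * s\<^sup>2 \<le> \<bar>b\<bar> * s\<^sup>2" by (intro mult_right_mono) auto
  moreover have "\<bar>b\<bar> * s\<^sup>2 = a\<^sup>2 * (\<bar>b\<bar> / (2 * (\<bar>b\<bar> + 1))) / (2 * (\<bar>b\<bar> + 1))"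
    unfolding s_def by (simp add: power2_eq_square field_simps)
  moreover have "\<bar>b\<bar> / (2 * (\<bar>b\<bar> + 1)) < 1" using pos by (simp add: field_simps)
  moreover have "a\<^sup>2 > 0" using a by simp
  ultimately have "a * s > b * s\<^sup>2"
    by (smt (verit) divide_strict_right_mono mult_less_cancel_left2 pos)
  with assms[of s] show False by simp
qed

section \<open>The spectral theorem for Hermitian matrices\<close>

definition orth_compl :: "'t set \<Rightarrow> ('t \<Rightarrow> 'n::finite \<Rightarrow> complex) \<Rightarrow> ('n \<Rightarrow> complex) set" where
  "orth_compl T u = {x. \<forall>t\<in>T. cinner (u t) x = 0}"

lemma orth_compl_lin: "x \<in> orth_compl T u \<Longrightarrow> w \<in> orth_compl T u \<Longrightarrow> (\<lambda>i. x i + s * w i) \<in> orth_compl T u"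
  unfolding orth_compl_def by (simp add: cinner_lin_right)

lemma orth_compl_scale: "w \<in> orth_compl T u \<Longrightarrow> (\<lambda>i. s * w i) \<in> orth_compl T u"
  unfolding orth_compl_def by (simp add: cinner_scale_right)

lemma inner_vec_lambda: "inner (z::complex^'n) (\<chi> i. w i) = Re (\<Sum>i\<in>UNIV. cnj (z$i) * w i)"
  by (simp add: inner_vec_def inner_complex_def Re_sum)

lemma vec_nth_lambda[simp]: "vec_nth (vec_lambda f) = f"
  by (rule ext) simp

lemma norm_vec_sq: "(norm (y::complex^'n))\<^sup>2 = vnorm2 (\<lambda>i. y$i)"
  unfolding power2_norm_eq_inner inner_vec_def vnorm2_def by (simp add: dot_square_norm)

lemma norm_vec_eq_1: "norm (y::complex^'n) = 1 \<longleftrightarrow> vnorm2 (\<lambda>i. y$i) = 1"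
  by (simp flip: norm_vec_sq add: abs_square_eq_1)

lemma vnorm2_normalize:
  "vnorm2 x > 0 \<Longrightarrow> vnorm2 (\<lambda>i. complex_of_real (1 / sqrt (vnorm2 x)) * x i) = 1"
  unfolding vnorm2_scale norm_of_real by (simp add: power_divide)

text \<open>Real orthogonality in \<open>complex^'n\<close> to both \<open>u t\<close> and \<open>\<i> u t\<close> is complex orthogonality.\<close>
lemma orth_compl_nonzero:
  fixes u :: "'t \<Rightarrow> ('n::finite \<Rightarrow> complex)"
  assumes "finite T" "card T < CARD('n)"
  shows "\<exists>x \<in> orth_compl T u. x \<noteq> (\<lambda>_. 0)"
proof -
  define B :: "(complex^'n) set" where
    "B = (\<lambda>t. \<chi> i. u t i) ` T \<union> (\<lambda>t. \<chi> i. \<i> * u t i) ` T"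
  have fB: "finite B" using assms(1) unfolding B_def by auto
  have "card B \<le> card ((\<lambda>t. \<chi> i. u t i) ` T) + card ((\<lambda>t. \<chi> i. \<i> * u t i) ` T)"
    unfolding B_def by (rule card_Un_le)
  also have "\<dots> \<le> card T + card T" by (intro add_mono card_image_le assms(1))
  finally have "dim B < DIM(complex^'n)"
    using dim_le_card[OF span_superset fB] assms(2) by simp
  then obtain x :: "complex^'n" where x: "x \<noteq> 0" "\<And>y. y \<in> span B \<Longrightarrow> orthogonal x y"
    using orthogonal_to_subspace_exists[of B] by blast
  define x' where "x' = (\<lambda>i. x $ i)"
  have "x' \<noteq> (\<lambda>_. 0)" using x(1) unfolding x'_def by (metis vec_eq_iff zero_index)
  moreover have "cinner (u t) x' = 0" if t: "t \<in> T" for t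
  proof -
    define c where "c = cinner (u t) x'"
    have "orthogonal x (\<chi> i. u t i)" using t by (intro x(2) span_base) (auto simp: B_def)
    moreover have "(\<Sum>i\<in>UNIV. cnj (x$i) * u t i) = cnj c"
      unfolding c_def cinner_def x'_def by (simp add: mult.commute)
    ultimately have "Re c = 0" by (simp add: orthogonal_def inner_vec_lambda)
    have "orthogonal x (\<chi> i. \<i> * u t i)" using t by (intro x(2) span_base) (auto simp: B_def)
    moreover have "(\<Sum>i\<in>UNIV. cnj (x$i) * (\<i> * u t i)) = \<i> * cnj c"
      unfolding c_def cinner_def x'_def by (simp add: mult_ac sum_distrib_left)
    ultimately have "Im c = 0" by (simp add: orthogonal_def inner_vec_lambda)
    with \<open>Re c = 0\<close> show ?thesis unfolding c_def by (simp add: complex_eq_iff)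
  qed
  ultimately show ?thesis unfolding orth_compl_def by blast
qed

lemma rayleigh_max_exists:
  fixes H :: "('n::finite,'n) cmat" and u :: "'t \<Rightarrow> 'n \<Rightarrow> complex"
  assumes "finite T" "card T < CARD('n)"
  shows "\<exists>x \<in> orth_compl T u. vnorm2 x = 1 \<and> (\<forall>z \<in> orth_compl T u.
           Re (cinner z (mvec H z)) \<le> Re (cinner x (mvec H x)) * vnorm2 z)"
proof -
  define S where "S = orth_compl T u"
  define q where "q x = Re (cinner x (mvec H x))" for x
  define C where "C = {y::complex^'n. (\<lambda>i. y$i) \<in> S \<and> norm y = 1}"
  define normalize :: "('n \<Rightarrow> complex) \<Rightarrow> complex^'n" where
    "normalize z = (\<chi> i. complex_of_real (1 / sqrt (vnorm2 z)) * z i)" for z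
  have normalize_nth: "vec_nth (normalize z) = (\<lambda>i. complex_of_real (1 / sqrt (vnorm2 z)) * z i)" for z
    unfolding normalize_def by simp
  have normalize_C: "normalize z \<in> C" if "z \<in> S" "z \<noteq> (\<lambda>_. 0)" for z
    using orth_compl_scale[OF that(1)[unfolded S_def], of "complex_of_real (1 / sqrt (vnorm2 z))"]
      vnorm2_normalize[OF vnorm2_pos[OF that(2)]]
    unfolding C_def norm_vec_eq_1 by (simp add: normalize_nth S_def)
  obtain x0 where "x0 \<in> S" "x0 \<noteq> (\<lambda>_. 0)"
    using orth_compl_nonzero[OF assms] unfolding S_def by blast
  hence Cne: "C \<noteq> {}" using normalize_C by blast
  have "closed C"
  proof -
    have "C = (\<Inter>t\<in>T. {y. cinner (u t) (\<lambda>i. y$i) = 0}) \<inter> {y. norm y = 1}"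
      unfolding C_def S_def orth_compl_def by auto
    moreover have "closed {y::complex^'n. cinner (u t) (\<lambda>i. y$i) = 0}" for t
      unfolding cinner_def by (intro closed_Collect_eq continuous_intros)
    moreover have "closed {y::complex^'n. norm y = 1}" by (intro closed_Collect_eq continuous_intros)
    ultimately show ?thesis by (auto intro: closed_INT closed_Int)
  qed
  moreover have "bounded C" by (rule bounded_subset[of "cball 0 1"]) (auto simp: C_def)
  ultimately have "compact C" by (simp add: compact_eq_bounded_closed)
  moreover have "continuous_on C (\<lambda>y. q (\<lambda>i. y$i))"
    unfolding q_def cinner_def mvec_def by (intro continuous_intros)
  ultimately obtain v where v: "v \<in> C" "\<And>y. y \<in> C \<Longrightarrow> q (\<lambda>i. y$i) \<le> q (\<lambda>i. v$i)"
    using continuous_attains_sup[OF _ Cne] by blast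
  define x where "x = (\<lambda>i. v$i)"
  have qscale: "q (\<lambda>i. c * z i) = (cmod c)\<^sup>2 * q z" for c z
    unfolding q_def mvec_scale cinner_scale_left cinner_scale_right
    by (simp add: mult.assoc[symmetric] cnj_mult_self)
  have "q z \<le> q x * vnorm2 z" if "z \<in> S" for z
  proof (cases "z = (\<lambda>_. 0)")
    case True thus ?thesis by (simp add: q_def cinner_def vnorm2_def)
  next
    case False
    hence pos: "vnorm2 z > 0" by (rule vnorm2_pos)
    have "q (vec_nth (normalize z)) \<le> q x" using v(2) normalize_C[OF that False] unfolding x_def .
    hence "q z / vnorm2 z \<le> q x"
      unfolding normalize_nth qscale norm_of_real using pos by (simp add: power_divide)
    thus ?thesis using pos by (simp add: field_simps)
  qed
  moreover have "x \<in> S" "vnorm2 x = 1" using v(1) unfolding C_def x_def norm_vec_eq_1 by auto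
  ultimately show ?thesis unfolding S_def q_def by blast
qed

text \<open>A maximiser of the Rayleigh quotient on an \<open>H\<close>-invariant subspace is an eigenvector: the
  quotient is stationary along every direction \<open>w \<perp> x\<close> in the subspace, so \<open>H x \<perp> w\<close>.\<close>
lemma rayleigh_max_eigenvector:
  fixes H :: "('n::finite,'n) cmat"
  assumes herm: "adj H = H"
    and inv: "\<And>z. z \<in> S \<Longrightarrow> mvec H z \<in> S"
    and lin: "\<And>z w s. z \<in> S \<Longrightarrow> w \<in> S \<Longrightarrow> (\<lambda>i. z i + s * w i) \<in> S"
    and xS: "x \<in> S" and x1: "vnorm2 x = 1"
    and max: "\<And>z. z \<in> S \<Longrightarrow> Re (cinner z (mvec H z)) \<le> Re (cinner x (mvec H x)) * vnorm2 z"
  shows "mvec H x = (\<lambda>i. cinner x (mvec H x) * x i)"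
proof -
  define q where "q x = Re (cinner x (mvec H x))" for x
  have re0: "Re (cinner w (mvec H x)) = 0" if wS: "w \<in> S" and wx: "cinner x w = 0" for w
  proof -
    have wx2: "cinner w x = 0" using wx cinner_commute by (metis complex_cnj_zero)
    have xHw: "cinner x (mvec H w) = cnj (cinner w (mvec H x))"
      using hermitian_cinner[OF herm] cinner_commute by metis
    have "Re (cinner w (mvec H x)) * (2 * s) \<le> (q x * vnorm2 w - q w) * s\<^sup>2" for s :: real
    proof -
      define z where "z = (\<lambda>i. x i + complex_of_real s * w i)"
      have "complex_of_real (vnorm2 z) = complex_of_real (1 + s\<^sup>2 * vnorm2 w)"
        unfolding cinner_self[symmetric] z_def cinner_expand
        by (simp add: cinner_self wx wx2 x1 power2_eq_square)
      moreover have "q z = q x + 2 * s * Re (cinner w (mvec H x)) + s\<^sup>2 * q w"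
        unfolding q_def z_def mvec_lin cinner_expand xHw by (simp add: power2_eq_square algebra_simps)
      moreover have "q z \<le> q x * vnorm2 z" using max lin[OF xS wS] unfolding z_def q_def by blast
      ultimately show ?thesis by (simp only: of_real_eq_iff) (simp add: algebra_simps)
    qed
    hence "Re (cinner w (mvec H x)) * 2 = 0"
      by (intro linear_le_quadratic_imp_zero[where b = "q x * vnorm2 w - q w"])
         (simp add: mult.assoc mult.left_commute)
    thus ?thesis by simp
  qed
  have perp: "cinner w (mvec H x) = 0" if wS: "w \<in> S" and wx: "cinner x w = 0" for w
  proof -
    have "(\<lambda>i. w i + (\<i> - 1) * w i) \<in> S" by (rule lin[OF wS wS])
    moreover have "(\<lambda>i. w i + (\<i> - 1) * w i) = (\<lambda>i. \<i> * w i)" by (auto simp: algebra_simps)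
    ultimately have "Re (cinner (\<lambda>i. \<i> * w i) (mvec H x)) = 0"
      using re0 wx by (simp add: cinner_scale_right)
    thus ?thesis using re0[OF wS wx] by (simp add: cinner_scale_left complex_eq_iff)
  qed
  define c where "c = cinner x (mvec H x)"
  define w where "w = (\<lambda>i. mvec H x i + (- c) * x i)"
  have wS: "w \<in> S" unfolding w_def by (rule lin[OF inv[OF xS] xS])
  have xw: "cinner x w = 0" unfolding w_def cinner_lin_right c_def by (simp add: cinner_self x1)
  have "cinner w w = cinner w (mvec H x) + (- c) * cinner w x"
    by (subst (2) w_def) (rule cinner_lin_right)
  also have "\<dots> = 0" using perp[OF wS xw] xw cinner_commute[of w x] by simp
  finally have "w = (\<lambda>_. 0)" by (simp add: cinner_self vnorm2_eq_0)
  thus ?thesis unfolding w_def c_def by (auto simp: fun_eq_iff)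
qed

lemma hermitian_eigenvector_orth_compl:
  fixes H :: "('n::finite,'n) cmat" and u :: "'t \<Rightarrow> 'n \<Rightarrow> complex"
  assumes herm: "adj H = H" and "finite T" "card T < CARD('n)"
    and inv: "\<And>z. z \<in> orth_compl T u \<Longrightarrow> mvec H z \<in> orth_compl T u"
  shows "\<exists>v \<in> orth_compl T u. vnorm2 v = 1 \<and> (\<exists>c. mvec H v = (\<lambda>i. c * v i))"
proof -
  obtain x where x: "x \<in> orth_compl T u" "vnorm2 x = 1" and "\<forall>z \<in> orth_compl T u.
      Re (cinner z (mvec H z)) \<le> Re (cinner x (mvec H x)) * vnorm2 z"
    using rayleigh_max_exists[OF assms(2,3), of u H] by blast
  hence "mvec H x = (\<lambda>i. cinner x (mvec H x) * x i)"
    by (intro rayleigh_max_eigenvector[OF herm inv orth_compl_lin]) auto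
  thus ?thesis using x by blast
qed

definition orthonormal :: "'t set \<Rightarrow> ('t \<Rightarrow> 'n::finite \<Rightarrow> complex) \<Rightarrow> bool" where
  "orthonormal J u \<longleftrightarrow> (\<forall>i\<in>J. \<forall>j\<in>J. cinner (u i) (u j) = (if i = j then 1 else 0))"

definition eigenvectors :: "('n::finite,'n) cmat \<Rightarrow> 't set \<Rightarrow> ('t \<Rightarrow> 'n \<Rightarrow> complex) \<Rightarrow> bool" where
  "eigenvectors H J u \<longleftrightarrow> (\<forall>j\<in>J. \<exists>c. mvec H (u j) = (\<lambda>i. c * u j i))"

lemma orthonormal_eigenbasis_extend:
  fixes H :: "('n::finite,'n) cmat" and u :: "'n \<Rightarrow> 'n \<Rightarrow> complex"
  assumes herm: "adj H = H" and "orthonormal J u" "eigenvectors H J u"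
  shows "\<exists>u'. (\<forall>j\<in>J. u' j = u j) \<and> orthonormal UNIV u' \<and> eigenvectors H UNIV u'"
  using assms(2,3)
proof (induction "card (UNIV - J)" arbitrary: J u)
  case 0
  hence "J = UNIV" by auto
  thus ?case using 0 by auto
next
  case (Suc m)
  have "UNIV - J \<noteq> {}" using Suc.hyps(2) by (metis card.empty nat.distinct(1))
  then obtain k where k: "k \<notin> J" by blast
  have "card (UNIV - J) = CARD('n) - card J" by (simp add: card_Diff_subset)
  hence "card J < CARD('n)" using Suc.hyps(2) by linarith
  moreover have "mvec H x \<in> orth_compl J u" if "x \<in> orth_compl J u" for x
    unfolding orth_compl_def mem_Collect_eq
  proof
    fix t assume t: "t \<in> J"
    then obtain c where c: "mvec H (u t) = (\<lambda>i. c * u t i)"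
      using Suc.prems(2) unfolding eigenvectors_def by auto
    have "cinner (u t) (mvec H x) = cnj c * cinner (u t) x"
      unfolding hermitian_cinner[OF herm] c cinner_scale_left ..
    thus "cinner (u t) (mvec H x) = 0" using that t unfolding orth_compl_def by simp
  qed
  ultimately obtain v c where v: "v \<in> orth_compl J u" "vnorm2 v = 1" "mvec H v = (\<lambda>i. c * v i)"
    using hermitian_eigenvector_orth_compl[OF herm finite, of J u] by blast
  define u1 where "u1 = u(k := v)"
  have "orthonormal (insert k J) u1"
  proof -
    have "cinner v v = 1" using v(2) by (simp add: cinner_self)
    moreover have "\<forall>t\<in>J. cinner (u t) v = 0" "\<forall>t\<in>J. cinner v (u t) = 0"
      using v(1) unfolding orth_compl_def by (auto simp: cinner_commute[of v])
    ultimately show ?thesis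
      using Suc.prems(1) k unfolding orthonormal_def u1_def by auto
  qed
  moreover have "eigenvectors H (insert k J) u1"
    using Suc.prems(2) v(3) k unfolding eigenvectors_def u1_def by auto
  moreover have "UNIV - insert k J = (UNIV - J) - {k}" by auto
  hence "m = card (UNIV - insert k J)" using Suc.hyps(2) k by (simp add: card_Diff_singleton)
  ultimately obtain u' where u': "\<forall>j\<in>insert k J. u' j = u1 j" "orthonormal UNIV u'" "eigenvectors H UNIV u'"
    using Suc.hyps(1) by blast
  have "\<forall>j\<in>J. u' j = u j" using u'(1) k unfolding u1_def by (metis fun_upd_other insertCI)
  thus ?case using u'(2,3) by blast
qed

lemma orthonormal_cols: "orthonormal UNIV u \<Longrightarrow> adj (cols u) ** cols u = idm"
  unfolding orthonormal_def by (auto intro!: ext simp: adj_mmult_cinner cols_def idm_def)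

text \<open>In finite dimension a left inverse is a right inverse; here \<open>idm - U U\<^sup>\<dagger>\<close> is a projector
  of trace \<open>0\<close>.\<close>
lemma isometry_square_imp_unitary:
  fixes U :: "('n::finite,'n) cmat"
  assumes "adj U ** U = idm" shows "U ** adj U = idm"
proof -
  define P where "P = U ** adj U"
  define Q where "Q = (\<lambda>i j. idm i j - P i j)"
  have "P ** P = U ** ((adj U ** U) ** adj U)" unfolding P_def by (simp only: mmult_assoc)
  hence PP: "P ** P = P" unfolding assms P_def by simp
  have "adj P = P" unfolding P_def by (simp add: adj_mmult)
  hence "adj Q = Q" unfolding Q_def adj_diff by simp
  moreover have "Q ** Q = Q" unfolding Q_def mmult_diff_left mmult_diff_right PP by simp
  moreover have "mtrace Q = 0"
    unfolding Q_def mtrace_diff P_def mtrace_comm[of U] assms by simp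
  ultimately have "mtrace (adj Q ** Q) = 0" by simp
  hence "Q = (\<lambda>_ _. 0)" by (rule mtrace_adj_mult_self_eq_0)
  hence "P = idm" unfolding Q_def by (metis (no_types, lifting) ext eq_iff_diff_eq_0)
  thus ?thesis unfolding P_def .
qed

lemma hermitian_form_real: "adj H = H \<Longrightarrow> Im (cinner x (mvec H x)) = 0"
  by (metis Reals_cnj_iff cinner_commute complex_is_Real_iff hermitian_cinner)

lemma hermitian_spectral:
  fixes H :: "('n::finite,'n) cmat"
  assumes herm: "adj H = H"
  shows "\<exists>(U::('n,'n) cmat) d. adj U ** U = idm \<and> U ** adj U = idm \<and> H = U ** diag d ** adj U"
proof -
  obtain u :: "'n \<Rightarrow> 'n \<Rightarrow> complex" where u: "orthonormal UNIV u" "eigenvectors H UNIV u"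
    using orthonormal_eigenbasis_extend[OF herm, of "{}" "\<lambda>_ _. 0"]
    unfolding orthonormal_def eigenvectors_def by auto
  define U where "U = cols u"
  define d where "d j = Re (cinner (u j) (mvec H (u j)))" for j
  have ev: "mvec H (u j) = (\<lambda>i. complex_of_real (d j) * u j i)" for j
  proof -
    obtain c where c: "mvec H (u j) = (\<lambda>i. c * u j i)" using u(2) unfolding eigenvectors_def by auto
    have "cinner (u j) (u j) = 1" using u(1) unfolding orthonormal_def by auto
    hence "cinner (u j) (mvec H (u j)) = c" unfolding c cinner_scale_right by simp
    moreover have "Im (cinner (u j) (mvec H (u j))) = 0" by (rule hermitian_form_real[OF herm])
    ultimately have "c = complex_of_real (d j)" unfolding d_def by (simp add: complex_eq_iff)
    thus ?thesis using c by simp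
  qed
  have HU: "H ** U = U ** diag d"
  proof (rule ext, rule ext)
    fix i j
    have "(H ** U) i j = mvec H (u j) i" unfolding U_def cols_def mmult_def mvec_def by simp
    thus "(H ** U) i j = (U ** diag d) i j" unfolding ev mmult_diag U_def cols_def by simp
  qed
  have U1: "adj U ** U = idm" unfolding U_def by (rule orthonormal_cols[OF u(1)])
  hence U2: "U ** adj U = idm" by (rule isometry_square_imp_unitary)
  have "H = H ** (U ** adj U)" using U2 by simp
  also have "\<dots> = U ** diag d ** adj U" by (simp add: HU flip: mmult_assoc)
  finally have "H = U ** diag d ** adj U" .
  with U1 U2 show ?thesis by blast
qed

section \<open>Positive semidefinite matrices and their square roots\<close>

lemma psd_iff: "psd M \<longleftrightarrow> (\<forall>v. Im (cinner v (mvec M v)) = 0 \<and> Re (cinner v (mvec M v)) \<ge> 0)"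
proof -
  have "(\<Sum>i\<in>UNIV. \<Sum>j\<in>UNIV. cnj (v i) * M i j * v j) = cinner v (mvec M v)" for v
    unfolding cinner_def mvec_def by (simp add: sum_distrib_left mult.assoc)
  thus ?thesis unfolding psd_def Let_def by simp
qed

lemma cinner_indicator: "cinner (\<lambda>k. if k = i then 1 else 0) z = z i"
  unfolding cinner_def by (simp add: if_distrib[where f="\<lambda>x. cnj x * _"] cong: if_cong)

lemma mvec_indicator: "mvec M (\<lambda>k. if k = j then 1 else 0) = (\<lambda>i. M i j)"
  unfolding mvec_def by (auto intro!: ext simp: if_distrib[where f="\<lambda>x. _ * x"] cong: if_cong)

text \<open>Polarisation: the sesquilinear form is recovered from the quadratic form at \<open>x + y\<close>
  and \<open>x + \<i> y\<close>.\<close>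
lemma psd_hermitian:
  assumes "psd M" shows "adj M = M"
proof -
  have real: "Im (cinner v (mvec M v)) = 0" for v using assms unfolding psd_iff by auto
  have sym: "cinner y (mvec M x) = cnj (cinner x (mvec M y))" for x y
  proof -
    define a where "a = cinner x (mvec M y)"
    define b where "b = cinner y (mvec M x)"
    have "cinner (\<lambda>k. x k + 1 * y k) (mvec M (\<lambda>k. x k + 1 * y k))
          = cinner x (mvec M x) + a + b + cinner y (mvec M y)"
      unfolding mvec_lin cinner_expand a_def b_def by simp
    hence "Im (a + b) = 0" using real[of x] real[of y] real[of "\<lambda>k. x k + 1 * y k"] by simp
    have "cinner (\<lambda>k. x k + \<i> * y k) (mvec M (\<lambda>k. x k + \<i> * y k))
          = cinner x (mvec M x) + \<i> * a - \<i> * b + cinner y (mvec M y)"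
      unfolding mvec_lin cinner_expand a_def b_def by (simp add: algebra_simps)
    hence "Re (a - b) = 0" using real[of x] real[of y] real[of "\<lambda>k. x k + \<i> * y k"] by simp
    with \<open>Im (a + b) = 0\<close> show ?thesis unfolding a_def b_def by (simp add: complex_eq_iff)
  qed
  show ?thesis
  proof (rule ext, rule ext)
    fix i j
    show "adj M i j = M i j"
      using sym[of "\<lambda>k. if k = j then 1 else 0" "\<lambda>k. if k = i then 1 else 0"]
      unfolding adj_def cinner_indicator mvec_indicator by simp
  qed
qed

lemma psd_form_eq_0_imp_kernel:
  assumes "psd S" "Re (cinner v (mvec S v)) = 0" shows "mvec S v = (\<lambda>_. 0)"
proof -
  have herm: "adj S = S" by (rule psd_hermitian[OF assms(1)])
  have nn: "Re (cinner x (mvec S x)) \<ge> 0" for x using assms(1) unfolding psd_iff by auto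
  have re0: "Re (cinner w (mvec S v)) = 0" for w
  proof -
    have "(- 2 * Re (cinner w (mvec S v))) * s \<le> Re (cinner w (mvec S w)) * s\<^sup>2" for s :: real
    proof -
      have vSw: "cinner v (mvec S w) = cnj (cinner w (mvec S v))"
        by (metis cinner_commute hermitian_cinner[OF herm])
      have "cinner (\<lambda>i. v i + complex_of_real s * w i) (mvec S (\<lambda>i. v i + complex_of_real s * w i))
        = cinner v (mvec S v) + complex_of_real s * cnj (cinner w (mvec S v))
          + complex_of_real s * cinner w (mvec S v) + complex_of_real (s\<^sup>2) * cinner w (mvec S w)"
        unfolding mvec_lin cinner_expand vSw by (simp add: power2_eq_square)
      with nn[of "\<lambda>i. v i + complex_of_real s * w i"] assms(2) show ?thesis
        by (simp add: algebra_simps)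
    qed
    hence "- 2 * Re (cinner w (mvec S v)) = 0" by (rule linear_le_quadratic_imp_zero)
    thus ?thesis by simp
  qed
  have "cinner w (mvec S v) = 0" for w
    using re0[of w] re0[of "\<lambda>i. \<i> * w i"] by (simp add: cinner_scale_left complex_eq_iff)
  from this[of "mvec S v"] show ?thesis by (simp only: cinner_self of_real_eq_0_iff vnorm2_eq_0)
qed

lemma psd_conj_diag:
  fixes A :: "('m::finite,'n::finite) cmat"
  assumes "\<And>k. g k \<ge> 0" shows "psd (A ** diag g ** adj A)"
  unfolding psd_iff
proof
  fix v
  have "cinner v (mvec (A ** diag g ** adj A) v)
      = cinner (mvec (adj A) v) (mvec (diag g) (mvec (adj A) v))"
    unfolding mvec_mmult cinner_adj ..
  also have "\<dots> = complex_of_real (\<Sum>k\<in>UNIV. g k * (cmod (mvec (adj A) v k))\<^sup>2)"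
    by (rule cinner_diag)
  finally show "Im (cinner v (mvec (A ** diag g ** adj A) v)) = 0 \<and> 0 \<le> Re (cinner v (mvec (A ** diag g ** adj A) v))"
    using assms by (simp add: sum_nonneg)
qed

lemma psd_adj_mult_self: "psd (adj (Y::('m::finite,'n::finite) cmat) ** Y)"
  using psd_conj_diag[of "\<lambda>_. 1" "adj Y"] by (simp add: diag_1)

lemma psd_mult_adj_self: "psd ((Y::('m::finite,'n::finite) cmat) ** adj Y)"
  using psd_adj_mult_self[of "adj Y"] by simp

lemma unitary_col_eigenvector:
  fixes U :: "('n::finite,'n) cmat"
  assumes "H = U ** diag d ** adj U" "adj U ** U = idm"
  shows "mvec H (\<lambda>i. U i j) = (\<lambda>i. complex_of_real (d j) * U i j)"
proof -
  have "H ** U = U ** diag d" unfolding assms(1) by (simp add: mmult_assoc assms(2))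
  hence "(H ** U) i j = (U ** diag d) i j" for i by simp
  thus ?thesis unfolding mmult_diag by (auto intro!: ext simp: mmult_def mvec_def mult.commute)
qed

lemma isometry_col_cinner:
  fixes U :: "('n::finite,'m::finite) cmat"
  assumes "adj U ** U = idm" shows "cinner (\<lambda>i. U i j) (\<lambda>i. U i k) = (if j = k then 1 else 0)"
  using fun_cong[OF fun_cong[OF assms, of j], of k] unfolding adj_mmult_cinner idm_def by simp

text \<open>On each eigenvector \<open>v\<close> of \<open>D = S\<^sub>1 - S\<^sub>2\<close> with eigenvalue \<open>\<lambda> \<noteq> 0\<close>, the identity
  \<open>S\<^sub>1 D + D S\<^sub>2 = S\<^sub>1\<^sup>2 - S\<^sub>2\<^sup>2 = 0\<close> gives \<open>\<lambda> (\<langle>v, S\<^sub>1 v\<rangle> + \<langle>v, S\<^sub>2 v\<rangle>) = 0\<close>, whence \<open>S\<^sub>1 v = S\<^sub>2 v = 0\<close>.\<close>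
lemma psd_sqrt_unique:
  fixes S1 S2 :: "('n::finite,'n) cmat"
  assumes p1: "psd S1" and p2: "psd S2" and eq: "S1 ** S1 = S2 ** S2"
  shows "S1 = S2"
proof -
  define D where "D = (\<lambda>i j. S1 i j - S2 i j)"
  have hD: "adj D = D" unfolding D_def adj_diff psd_hermitian[OF p1] psd_hermitian[OF p2] ..
  obtain U :: "('n,'n) cmat" and d where U: "adj U ** U = idm" "D = U ** diag d ** adj U"
    using hermitian_spectral[OF hD] by blast
  have d0: "d j = 0" for j
  proof (rule ccontr)
    assume dj: "d j \<noteq> 0"
    define v where "v = (\<lambda>i. U i j)"
    have Dv: "mvec D v = (\<lambda>i. complex_of_real (d j) * v i)"
      unfolding v_def by (rule unitary_col_eigenvector[OF U(2,1)])
    have "cinner v (mvec S1 (mvec D v)) + cinner v (mvec D (mvec S2 v))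
        = cinner v (mvec (S1 ** S1) v) - cinner v (mvec (S2 ** S2) v)"
      unfolding D_def mvec_diff mvec_vdiff mvec_mmult cinner_diff_right by simp
    also have "\<dots> = 0" using eq by simp
    finally have "complex_of_real (d j) * (cinner v (mvec S1 v) + cinner v (mvec S2 v)) = 0"
      unfolding hermitian_cinner[OF hD, of v] Dv mvec_scale cinner_scale_right cinner_scale_left
      by (simp add: algebra_simps)
    hence sum0: "cinner v (mvec S1 v) + cinner v (mvec S2 v) = 0" using dj by simp
    have "Re (cinner v (mvec S1 v)) + Re (cinner v (mvec S2 v)) = 0"
      using arg_cong[where f=Re, OF sum0] by simp
    moreover have "Re (cinner v (mvec S1 v)) \<ge> 0" "Re (cinner v (mvec S2 v)) \<ge> 0"
      using p1 p2 unfolding psd_iff by auto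
    ultimately have "mvec S1 v = (\<lambda>_. 0)" "mvec S2 v = (\<lambda>_. 0)"
      using psd_form_eq_0_imp_kernel[OF p1, of v] psd_form_eq_0_imp_kernel[OF p2, of v] by simp_all
    hence "(\<lambda>i. complex_of_real (d j) * v i) = (\<lambda>_. 0)" using Dv unfolding D_def mvec_diff by simp
    hence "v = (\<lambda>_. 0)" using dj by (auto simp: fun_eq_iff)
    moreover have "cinner v v = 1" unfolding v_def using isometry_col_cinner[OF U(1), of j j] by simp
    ultimately show False by (simp add: cinner_def)
  qed
  hence "diag d = (\<lambda>_ _. 0)" unfolding diag_def by (auto intro!: ext)
  hence "D = (\<lambda>_ _. 0)" unfolding U(2) by (simp add: mmult_def)
  thus ?thesis unfolding D_def by (metis (no_types, lifting) ext eq_iff_diff_eq_0)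
qed

lemma psd_spectral:
  fixes M :: "('n::finite,'n) cmat"
  assumes "psd M"
  shows "\<exists>(U::('n,'n) cmat) d. adj U ** U = idm \<and> U ** adj U = idm \<and> M = U ** diag d ** adj U
           \<and> (\<forall>j. d j \<ge> 0)"
proof -
  obtain U :: "('n,'n) cmat" and d
    where U: "adj U ** U = idm" "U ** adj U = idm" "M = U ** diag d ** adj U"
    using hermitian_spectral[OF psd_hermitian[OF assms]] by blast
  have "d j \<ge> 0" for j
  proof -
    define v where "v = (\<lambda>i. U i j)"
    have "cinner v (mvec M v) = complex_of_real (d j) * cinner v v"
      unfolding v_def unitary_col_eigenvector[OF U(3,1)] cinner_scale_right ..
    moreover have "cinner v v = 1" unfolding v_def using isometry_col_cinner[OF U(1), of j j] by simp
    moreover have "Re (cinner v (mvec M v)) \<ge> 0" using assms unfolding psd_iff by blast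
    ultimately show ?thesis by simp
  qed
  thus ?thesis using U by blast
qed

lemma msqrt_eq:
  assumes "psd S" "S ** S = M" shows "msqrt M = S"
  unfolding msqrt_def using assms psd_sqrt_unique by (intro the_equality) auto

lemma conj_diag_sqrt_square:
  fixes U :: "('n::finite,'n) cmat"
  assumes "adj U ** U = idm" "\<And>j. d j \<ge> 0"
  shows "U ** diag (\<lambda>j. sqrt (d j)) ** adj U ** (U ** diag (\<lambda>j. sqrt (d j)) ** adj U)
      = U ** diag d ** adj U"
proof -
  have "U ** diag (\<lambda>j. sqrt (d j)) ** adj U ** (U ** diag (\<lambda>j. sqrt (d j)) ** adj U)
      = U ** (diag (\<lambda>j. sqrt (d j)) ** (adj U ** U) ** diag (\<lambda>j. sqrt (d j))) ** adj U"
    by (simp add: mmult_assoc)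
  also have "\<dots> = U ** diag d ** adj U"
    unfolding assms(1) using assms(2) by (simp add: diag_mmult_diag mmult_assoc)
  finally show ?thesis .
qed

lemma msqrt_conj_diag:
  fixes U :: "('n::finite,'n) cmat"
  assumes "adj U ** U = idm" "\<And>j. d j \<ge> 0"
  shows "msqrt (U ** diag d ** adj U) = U ** diag (\<lambda>j. sqrt (d j)) ** adj U"
  using assms by (intro msqrt_eq psd_conj_diag conj_diag_sqrt_square) auto

lemma
  fixes M :: "('n::finite,'n) cmat"
  assumes "psd M"
  shows psd_msqrt: "psd (msqrt M)" and msqrt_mult_self: "msqrt M ** msqrt M = M"
proof -
  obtain U :: "('n,'n) cmat" and d where U: "adj U ** U = idm" "M = U ** diag d ** adj U"
    "\<forall>j. d j \<ge> 0"
    using psd_spectral[OF assms] by blast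
  have "msqrt M = U ** diag (\<lambda>j. sqrt (d j)) ** adj U"
    unfolding U(2) using U(1,3) by (simp add: msqrt_conj_diag)
  thus "psd (msqrt M)" "msqrt M ** msqrt M = M"
    unfolding U(2) using U(1,3) by (simp_all add: psd_conj_diag conj_diag_sqrt_square)
qed

lemma mtrace_conj_diag:
  fixes U :: "('n::finite,'n) cmat"
  assumes "adj U ** U = idm"
  shows "mtrace (U ** diag d ** adj U) = complex_of_real (\<Sum>j\<in>UNIV. d j)"
proof -
  have "mtrace (U ** diag d ** adj U) = mtrace (adj U ** (U ** diag d))" by (rule mtrace_comm)
  thus ?thesis by (simp add: assms mtrace_diag flip: mmult_assoc)
qed

lemma vnorm2_col_diag_gram:
  assumes "adj B ** B = diag d" shows "vnorm2 (\<lambda>i. B i j) = d j"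
  using fun_cong[OF fun_cong[OF assms, of j], of j]
  unfolding adj_mmult_cinner cinner_self diag_def by simp

lemma mmult_support_diag_gram:
  assumes "adj B ** B = diag d" "\<forall>j. d j \<ge> 0"
  shows "B ** diag (\<lambda>j. if d j > 0 then 1 else 0) = B"
proof (rule ext, rule ext)
  fix i j
  have "B i j = 0" if "\<not> d j > 0"
  proof -
    have "vnorm2 (\<lambda>i. B i j) = 0" using that assms(2) vnorm2_col_diag_gram[OF assms(1)]
      by (metis antisym not_less)
    thus ?thesis unfolding vnorm2_eq_0 by metis
  qed
  thus "(B ** diag (\<lambda>j. if d j > 0 then 1 else 0)) i j = B i j" unfolding mmult_diag by auto
qed

text \<open>With \<open>g\<^sub>j = d\<^sub>j\<^sup>-\<^sup>1\<^sup>/\<^sup>2\<close> on the support of \<open>d\<close>, the square root of \<open>B B\<^sup>\<dagger>\<close> is \<open>B diag(g) B\<^sup>\<dagger>\<close>.\<close>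
lemma mtrace_msqrt_mult_adj_diag_gram:
  fixes B :: "('m::finite,'n::finite) cmat"
  assumes BB: "adj B ** B = diag d" and d: "\<forall>j. d j \<ge> 0"
  shows "mtrace (msqrt (B ** adj B)) = complex_of_real (\<Sum>j\<in>UNIV. sqrt (d j))"
proof -
  define g where "g j = (if d j > 0 then 1 / sqrt (d j) else 0)" for j
  define p where "p j = (if d j > 0 then 1 else (0::real))" for j
  define S where "S = B ** diag g ** adj B"
  have "g j * d j * g j = p j" for j
    by (cases "d j > 0") (simp_all add: g_def p_def divide_simps)
  hence "diag g ** diag d ** diag g = diag p" unfolding diag_mmult_diag by simp
  moreover have "S ** S = B ** (diag g ** (adj B ** B) ** diag g) ** adj B"
    unfolding S_def by (simp add: mmult_assoc)
  ultimately have "S ** S = B ** adj B"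
    unfolding BB p_def by (simp add: mmult_support_diag_gram[OF BB d] flip: mmult_assoc)
  moreover have "psd S" unfolding S_def by (rule psd_conj_diag) (simp add: g_def)
  ultimately have "msqrt (B ** adj B) = S" by (simp add: msqrt_eq)
  moreover have "mtrace S = mtrace (adj B ** B ** diag g)"
    unfolding S_def mtrace_comm[of "B ** diag g"] by (simp add: mmult_assoc)
  moreover have "d j * g j = sqrt (d j)" for j
    using d[rule_format, of j] by (cases "d j > 0") (simp_all add: g_def real_div_sqrt)
  ultimately show ?thesis unfolding BB diag_mmult_diag mtrace_diag by simp
qed

lemma mtrace_msqrt_mult_adj_commute:
  fixes Y :: "('m::finite,'n::finite) cmat"
  shows "mtrace (msqrt (Y ** adj Y)) = mtrace (msqrt (adj Y ** Y))"
proof -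
  obtain V :: "('n,'n) cmat" and d where V: "adj V ** V = idm" "V ** adj V = idm"
    "adj Y ** Y = V ** diag d ** adj V" "\<forall>j. d j \<ge> 0"
    using psd_spectral[OF psd_adj_mult_self[of Y]] by blast
  have "adj (Y ** V) ** (Y ** V) = adj V ** (V ** diag d ** adj V) ** V"
    unfolding adj_mmult V(3)[symmetric] by (simp add: mmult_assoc)
  also have "\<dots> = diag d" by (simp add: mmult_assoc V(1) flip: mmult_assoc[of "adj V" V])
  finally have "mtrace (msqrt ((Y ** V) ** adj (Y ** V))) = complex_of_real (\<Sum>j\<in>UNIV. sqrt (d j))"
    using V(4) by (rule mtrace_msqrt_mult_adj_diag_gram)
  moreover have "(Y ** V) ** adj (Y ** V) = Y ** adj Y"
    unfolding adj_mmult by (simp add: mmult_assoc V(2) flip: mmult_assoc[of V])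
  moreover have "mtrace (msqrt (adj Y ** Y)) = complex_of_real (\<Sum>j\<in>UNIV. sqrt (d j))"
    unfolding V(3) using V(1,4) by (simp add: msqrt_conj_diag mtrace_conj_diag)
  ultimately show ?thesis by simp
qed

lemma mconj_mmult: "mconj (A ** B) = mconj A ** mconj B"
  unfolding mconj_def mmult_def by (auto intro!: ext)

lemma adj_mconj: "adj (mconj A) = mconj (adj A)"
  unfolding mconj_def adj_def by auto

lemma mtrace_mconj: "mtrace (mconj A) = cnj (mtrace A)"
  unfolding mconj_def mtrace_def by simp

lemma psd_mconj: "psd M \<Longrightarrow> psd (mconj M)"
proof -
  have "cinner v (mvec (mconj M) v) = cnj (cinner (\<lambda>i. cnj (v i)) (mvec M (\<lambda>i. cnj (v i))))" for v
    unfolding cinner_def mvec_def mconj_def by simp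
  thus "psd M \<Longrightarrow> psd (mconj M)" unfolding psd_iff by simp
qed

lemma msqrt_mconj:
  assumes "psd M" shows "msqrt (mconj M) = mconj (msqrt M)"
proof (rule msqrt_eq)
  show "psd (mconj (msqrt M))" by (intro psd_mconj psd_msqrt assms)
  show "mconj (msqrt M) ** mconj (msqrt M) = mconj M"
    unfolding mconj_mmult[symmetric] msqrt_mult_self[OF assms] ..
qed

section \<open>Singular value decomposition\<close>

lemma orthonormal_extend:
  fixes u :: "'n \<Rightarrow> 'n::finite \<Rightarrow> complex"
  assumes "orthonormal J u" shows "\<exists>u'. (\<forall>j\<in>J. u' j = u j) \<and> orthonormal UNIV u'"
proof -
  have "adj (\<lambda>_ _. 0) = (\<lambda>_ _. 0 :: complex)" unfolding adj_def by simp
  moreover have "eigenvectors (\<lambda>_ _. 0) J u" unfolding eigenvectors_def by (auto simp: mvec_def intro!: exI[of _ 0])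
  ultimately show ?thesis using orthonormal_eigenbasis_extend assms by blast
qed

text \<open>Normalise the nonzero (pairwise orthogonal) columns of \<open>B\<close> and complete them to a basis.\<close>
lemma diag_gram_factor:
  fixes B :: "('n::finite,'n) cmat"
  assumes BB: "adj B ** B = diag d" and d: "\<forall>j. d j \<ge> 0"
  shows "\<exists>U. adj U ** U = idm \<and> B = U ** diag (\<lambda>j. sqrt (d j))"
proof -
  define J where "J = {j. d j > 0}"
  define u0 where "u0 j = (\<lambda>i. complex_of_real (1 / sqrt (d j)) * B i j)" for j
  have "orthonormal J u0"
    unfolding orthonormal_def
  proof (intro ballI)
    fix i j assume "i \<in> J" "j \<in> J"
    hence "d i > 0" "d j > 0" unfolding J_def by auto
    have "cinner (u0 i) (u0 j) = complex_of_real (1 / sqrt (d i) * (1 / sqrt (d j))) * (adj B ** B) i j"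
      unfolding u0_def cinner_scale_left cinner_scale_right adj_mmult_cinner by simp
    also have "\<dots> = (if i = j then complex_of_real (1 / sqrt (d j) * (1 / sqrt (d j)) * d j) else 0)"
      unfolding BB diag_def by (cases "i = j") (simp_all del: of_real_divide flip: of_real_mult)
    also have "1 / sqrt (d j) * (1 / sqrt (d j)) * d j = 1"
      using \<open>d j > 0\<close> by (simp add: field_simps)
    finally show "cinner (u0 i) (u0 j) = (if i = j then 1 else 0)" by simp
  qed
  then obtain u where u: "\<forall>j\<in>J. u j = u0 j" "orthonormal UNIV u"
    using orthonormal_extend by blast
  have "cols u ** diag (\<lambda>j. sqrt (d j)) = B ** diag (\<lambda>j. if d j > 0 then 1 else 0)"
    using u(1) d unfolding mmult_diag cols_def J_def u0_def
    by (auto intro!: ext simp: order.order_iff_strict)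
  thus ?thesis
    using orthonormal_cols[OF u(2)] mmult_support_diag_gram[OF BB d] by metis
qed

lemma svd_diag_exists:
  fixes K :: "('n::finite,'n) cmat"
  obtains U V :: "('n,'n) cmat" and s where
    "adj U ** U = idm" "U ** adj U = idm" "adj V ** V = idm" "V ** adj V = idm"
    "\<And>i. s i \<ge> 0" "K = U ** diag s ** adj V"
proof -
  obtain V :: "('n,'n) cmat" and d where V: "adj V ** V = idm" "V ** adj V = idm"
    "adj K ** K = V ** diag d ** adj V" "\<forall>j. d j \<ge> 0"
    using psd_spectral[OF psd_adj_mult_self[of K]] by blast
  have "adj (K ** V) ** (K ** V) = adj V ** (V ** diag d ** adj V) ** V"
    unfolding adj_mmult V(3)[symmetric] by (simp add: mmult_assoc)
  also have "\<dots> = diag d" by (simp add: mmult_assoc V(1) flip: mmult_assoc[of "adj V" V])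
  finally obtain U where U: "adj U ** U = idm" "K ** V = U ** diag (\<lambda>j. sqrt (d j))"
    using diag_gram_factor V(4) by blast
  have "K = K ** (V ** adj V)" using V(2) by simp
  hence "K = U ** diag (\<lambda>j. sqrt (d j)) ** adj V" by (simp add: U(2) flip: mmult_assoc)
  moreover have "U ** adj U = idm" using U(1) by (rule isometry_square_imp_unitary)
  ultimately show thesis using that[of U V "\<lambda>j. sqrt (d j)"] U(1) V(1,2,4) by simp
qed

section \<open>Fidelity and the Uhlmann overlap\<close>

lemma trace_norm_mconj: "trace_norm (mconj N) = trace_norm N"
  unfolding trace_norm_def adj_mconj mconj_mmult[symmetric] msqrt_mconj[OF psd_adj_mult_self]
    mtrace_mconj by simp

text \<open>With \<open>Y = \<surd>(\<Phi>\<Phi>\<^sup>\<dagger>) \<Psi>\<close>, the Gram matrix of \<open>\<surd>(\<Psi>\<Psi>\<^sup>\<dagger>) \<surd>(\<Phi>\<Phi>\<^sup>\<dagger>)\<close> is \<open>Y Y\<^sup>\<dagger>\<close> and that of \<open>\<Phi>\<^sup>\<dagger>\<Psi>\<close>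
  is \<open>Y\<^sup>\<dagger> Y\<close>; these have the same nonzero spectrum.\<close>
lemma trace_norm_sqrt_gram_product:
  fixes \<Psi> \<Phi> :: "('a::finite, 'b::finite) cmat"
  shows "trace_norm (msqrt (\<Psi> ** adj \<Psi>) ** msqrt (\<Phi> ** adj \<Phi>)) = trace_norm (adj \<Phi> ** \<Psi>)"
proof -
  define R where "R = msqrt (\<Psi> ** adj \<Psi>)"
  define T where "T = msqrt (\<Phi> ** adj \<Phi>)"
  have hR: "adj R = R" unfolding R_def by (intro psd_hermitian psd_msqrt psd_mult_adj_self)
  have hT: "adj T = T" unfolding T_def by (intro psd_hermitian psd_msqrt psd_mult_adj_self)
  have RR: "R ** R = \<Psi> ** adj \<Psi>" unfolding R_def by (intro msqrt_mult_self psd_mult_adj_self)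
  have TT: "T ** T = \<Phi> ** adj \<Phi>" unfolding T_def by (intro msqrt_mult_self psd_mult_adj_self)
  define Y where "Y = T ** \<Psi>"
  have "adj (R ** T) ** (R ** T) = T ** (R ** R) ** T"
    unfolding adj_mmult hR hT by (simp only: mmult_assoc)
  also have "\<dots> = Y ** adj Y" unfolding RR Y_def adj_mmult hT by (simp only: mmult_assoc)
  finally have X: "adj (R ** T) ** (R ** T) = Y ** adj Y" .
  have "adj Y ** Y = adj \<Psi> ** (T ** T) ** \<Psi>" unfolding Y_def adj_mmult hT by (simp only: mmult_assoc)
  also have "\<dots> = adj (adj \<Phi> ** \<Psi>) ** (adj \<Phi> ** \<Psi>)"
    unfolding TT adj_mmult adj_adj by (simp only: mmult_assoc)
  finally have "adj Y ** Y = adj (adj \<Phi> ** \<Psi>) ** (adj \<Phi> ** \<Psi>)" .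
  thus ?thesis
    unfolding trace_norm_def R_def[symmetric] T_def[symmetric] X mtrace_msqrt_mult_adj_commute
    by simp
qed

definition bipartite_mat :: "('a \<times> 'b \<Rightarrow> complex) \<Rightarrow> ('a,'b) cmat" where
  "bipartite_mat \<psi> = (\<lambda>a b. \<psi> (a,b))"

lemma ptrace_B_ketbra_self:
  "ptrace_B (ketbra \<psi> \<psi>) = bipartite_mat \<psi> ** adj (bipartite_mat (\<psi> :: 'a \<times> 'b::finite \<Rightarrow> complex))"
  unfolding ptrace_B_def ketbra_def mmult_def adj_def bipartite_mat_def by simp

lemma ptrace_A_ketbra:
  "ptrace_A (ketbra \<phi> \<psi>) = mconj (adj (bipartite_mat \<phi>) ** bipartite_mat (\<psi> :: 'a::finite \<times> 'b \<Rightarrow> complex))"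
  unfolding ptrace_A_def ketbra_def mmult_def adj_def bipartite_mat_def mconj_def by simp

lemma fidelity_ptrace_B:
  fixes \<psi> \<phi> :: "'a::finite \<times> 'b::finite \<Rightarrow> complex"
  shows "fidelity (ptrace_B (ketbra \<psi> \<psi>)) (ptrace_B (ketbra \<phi> \<phi>))
     = (trace_norm (ptrace_A (ketbra \<phi> \<psi>)))\<^sup>2"
  unfolding fidelity_def ptrace_B_ketbra_self ptrace_A_ketbra trace_norm_mconj
    trace_norm_sqrt_gram_product ..

lemma trace_norm_svd:
  fixes U V :: "('n::finite,'n) cmat"
  assumes "adj U ** U = idm" "adj V ** V = idm" "K = U ** diag s ** adj V" "\<And>i. s i \<ge> 0"
  shows "trace_norm K = (\<Sum>i\<in>UNIV. s i)"
proof -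
  have "adj K ** K = V ** (diag s ** (adj U ** U) ** diag s) ** adj V"
    unfolding assms(3) adj_mmult adj_adj adj_diag by (simp only: mmult_assoc)
  also have "\<dots> = V ** diag (\<lambda>i. s i * s i) ** adj V"
    unfolding assms(1) by (simp add: diag_mmult_diag mmult_assoc)
  finally have "msqrt (adj K ** K) = V ** diag (\<lambda>i. sqrt (s i * s i)) ** adj V"
    using msqrt_conj_diag[OF assms(2), of "\<lambda>i. s i * s i"] by simp
  also have "(\<lambda>i. sqrt (s i * s i)) = s" using assms(4) by (auto intro!: ext)
  finally show ?thesis unfolding trace_norm_def by (simp add: mtrace_conj_diag[OF assms(2)])
qed

lemma sum_UNIV_prod:
  "(\<Sum>x\<in>(UNIV::('a::finite \<times> 'b::finite) set). f x) = (\<Sum>a\<in>UNIV. \<Sum>b\<in>UNIV. f (a, b))"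
  by (simp add: sum.cartesian_product flip: UNIV_Times_UNIV)

lemma mvec_id_tensor: "mvec (id_tensor R) \<psi> (a, b) = mvec R (\<lambda>b'. \<psi> (a, b')) b"
proof -
  have "mvec (id_tensor R) \<psi> (a, b)
      = (\<Sum>a'\<in>UNIV. if a = a' then (\<Sum>b'\<in>UNIV. R b b' * \<psi> (a', b')) else 0)"
    unfolding mvec_def sum_UNIV_prod id_tensor_def by (intro sum.cong) auto
  thus ?thesis unfolding mvec_def by simp
qed

lemma sandwich_cinner: "sandwich x M y = cinner x (mvec M y)"
  unfolding sandwich_def cinner_def mvec_def by (simp add: sum_distrib_left mult.assoc)

lemma sandwich_id_tensor:
  fixes \<psi> \<phi> :: "'a::finite \<times> 'b::finite \<Rightarrow> complex"
  shows "sandwich \<phi> (id_tensor R) \<psi> = mtrace (R ** adj (ptrace_A (ketbra \<phi> \<psi>)))"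
proof -
  have "sandwich \<phi> (id_tensor R) \<psi>
      = (\<Sum>a\<in>UNIV. \<Sum>b\<in>UNIV. \<Sum>b'\<in>UNIV. cnj (\<phi> (a,b)) * (R b b' * \<psi> (a, b')))"
    unfolding sandwich_cinner cinner_def sum_UNIV_prod mvec_id_tensor
    by (simp add: mvec_def sum_distrib_left)
  also have "\<dots> = (\<Sum>b\<in>UNIV. \<Sum>b'\<in>UNIV. \<Sum>a\<in>UNIV. cnj (\<phi> (a,b)) * (R b b' * \<psi> (a, b')))"
    by (subst sum.swap) (simp add: sum.swap[of _ _ "UNIV::'a set"])
  also have "\<dots> = mtrace (R ** adj (ptrace_A (ketbra \<phi> \<psi>)))"
    unfolding mtrace_def mmult_def adj_def ptrace_A_def ketbra_def
    by (simp add: sum_distrib_left mult_ac)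
  finally show ?thesis .
qed

lemma vnorm2_prod: "vnorm2 (\<psi> :: 'a::finite \<times> 'b::finite \<Rightarrow> complex) = (\<Sum>a\<in>UNIV. vnorm2 (\<lambda>b. \<psi> (a, b)))"
  unfolding vnorm2_def sum_UNIV_prod ..

lemma vnorm2_id_tensor_isometry:
  assumes "adj Z ** Z = idm"
  shows "vnorm2 (mvec (id_tensor Z) (\<psi> :: 'a::finite \<times> 'b::finite \<Rightarrow> complex)) = vnorm2 \<psi>"
  unfolding vnorm2_prod[of "mvec (id_tensor Z) \<psi>"] mvec_id_tensor
    isometry_vnorm2[OF assms] vnorm2_prod[of \<psi>] ..

lemma sandwich_id_tensor_isometry_le_1:
  assumes "adj Z ** Z = idm" "pure_state \<psi>" "pure_state \<phi>"
  shows "cmod (sandwich \<phi> (id_tensor Z) (\<psi> :: 'a::finite \<times> 'b::finite \<Rightarrow> complex)) \<le> 1"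
proof -
  have "vnorm2 \<psi> = 1" "vnorm2 \<phi> = 1" using assms(2,3) unfolding pure_state_def vnorm2_def .
  thus ?thesis using cmod_cinner_le_mean_vnorm2[of \<phi> "mvec (id_tensor Z) \<psi>"]
    unfolding sandwich_cinner vnorm2_id_tensor_isometry[OF assms(1)] by simp
qed

section \<open>The canonical Uhlmann partial isometry\<close>

lemma sgn_eta_svd:
  fixes K :: "('n::finite,'n) cmat"
  obtains U V :: "('n,'n) cmat" and s where
    "adj U ** U = idm" "U ** adj U = idm" "adj V ** V = idm" "V ** adj V = idm"
    "\<And>i. s i \<ge> 0" "K = U ** diag s ** adj V"
    "sgn_eta \<eta> K = U ** diag (\<lambda>i. if s i > \<eta> then 1 else 0) ** adj V"
proof -
  have "\<exists>U S V. is_svd K U S V"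
  proof (rule svd_diag_exists[of K])
    fix U V :: "('n,'n) cmat" and s
    assume "adj U ** U = idm" "U ** adj U = idm" "adj V ** V = idm" "V ** adj V = idm"
      "\<And>i. s i \<ge> 0" "K = U ** diag s ** adj V"
    hence "is_svd K U (diag s) V" unfolding is_svd_def unitary_def by (simp add: diag_def)
    thus ?thesis by blast
  qed
  hence "\<exists>W U S V. is_svd K U S V \<and> W = U ** (\<lambda>i j. if i = j \<and> Re (S i i) > \<eta> then 1 else 0) ** adj V"
    by blast
  from someI_ex[OF this] obtain U S V where svd: "is_svd K U S V"
    and W: "sgn_eta \<eta> K = U ** (\<lambda>i j. if i = j \<and> Re (S i i) > \<eta> then 1 else 0) ** adj V"
    unfolding sgn_eta_def by blast
  define s where "s i = Re (S i i)" for i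
  have "S = diag s" using svd unfolding is_svd_def diag_def s_def by (auto intro!: ext simp: complex_eq_iff)
  hence "K = U ** diag s ** adj V" using svd unfolding is_svd_def by simp
  moreover have "(\<lambda>i j. if i = j \<and> Re (S i i) > \<eta> then 1 else 0) = diag (\<lambda>i. if s i > \<eta> then 1 else 0)"
    unfolding diag_def s_def by (auto intro!: ext)
  moreover have "adj U ** U = idm" "U ** adj U = idm" "adj V ** V = idm" "V ** adj V = idm" "s i \<ge> 0" for i
    using svd unfolding is_svd_def unitary_def s_def by auto
  ultimately show thesis using that[of U V s] W by simp
qed

lemma partial_isometry_conj_diag_indicator:
  fixes U V :: "('n::finite,'n) cmat"
  assumes "adj U ** U = idm" "adj V ** V = idm" "V ** adj V = idm" "\<And>i. p i * p i = p i"
  shows "partial_isometry (U ** diag p ** adj V)"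
  unfolding partial_isometry_def
proof (intro exI conjI)
  have "adj (U ** adj V) ** (U ** adj V) = V ** (adj U ** U) ** adj V"
    unfolding adj_mmult adj_adj by (simp only: mmult_assoc)
  thus "isometry (U ** adj V)" unfolding isometry_def assms(1) by (simp add: assms(3))
  have "diag p ** diag p = diag p" unfolding diag_mmult_diag assms(4) ..
  moreover have "V ** diag p ** adj V ** (V ** diag p ** adj V) = V ** (diag p ** (adj V ** V) ** diag p) ** adj V"
    by (simp only: mmult_assoc)
  ultimately show "projector (V ** diag p ** adj V)"
    unfolding projector_def adj_mmult adj_adj adj_diag assms(2) by (simp add: mmult_assoc)
  show "U ** diag p ** adj V = U ** adj V ** (V ** diag p ** adj V)"
    by (simp add: mmult_assoc assms(2) flip: mmult_assoc[of "adj V" V])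
qed

lemma mtrace_mmult_adj_svd:
  assumes "K = U ** diag s ** adj V"
  shows "mtrace (R ** adj K) = (\<Sum>i\<in>UNIV. (adj U ** R ** V) i i * complex_of_real (s i))"
proof -
  have "mtrace (R ** adj K) = mtrace (R ** V ** (diag s ** adj U))"
    unfolding assms adj_mmult adj_adj adj_diag by (simp only: mmult_assoc)
  also have "\<dots> = mtrace ((adj U ** R ** V) ** diag s)"
    unfolding mtrace_comm[of "R ** V"] by (subst mtrace_comm) (simp only: mmult_assoc)
  finally show ?thesis unfolding mtrace_mmult_diag .
qed

lemma unitary_conj_diag_cancel:
  assumes "adj U ** U = idm" "adj V ** V = idm"
  shows "adj U ** (U ** diag p ** adj V) ** V = diag p"
  by (simp add: mmult_assoc assms flip: mmult_assoc[of "adj V" V] mmult_assoc[of "adj U" U])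

lemma trace_norm_ptrace_A_le_1:
  fixes \<psi> \<phi> :: "'a::finite \<times> 'b::finite \<Rightarrow> complex"
  assumes "pure_state \<psi>" "pure_state \<phi>"
  shows "trace_norm (ptrace_A (ketbra \<phi> \<psi>)) \<le> 1"
proof (rule svd_diag_exists[of "ptrace_A (ketbra \<phi> \<psi>)"])
  fix U V :: "('b,'b) cmat" and s
  assume U: "adj U ** U = idm" "U ** adj U = idm" and V: "adj V ** V = idm" "V ** adj V = idm"
    and s: "\<And>i. s i \<ge> 0" and K: "ptrace_A (ketbra \<phi> \<psi>) = U ** diag s ** adj V"
  have "adj (U ** adj V) ** (U ** adj V) = V ** (adj U ** U) ** adj V"
    unfolding adj_mmult adj_adj by (simp only: mmult_assoc)
  hence "adj (U ** adj V) ** (U ** adj V) = idm" unfolding U(1) by (simp add: V(2))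
  hence "cmod (sandwich \<phi> (id_tensor (U ** diag (\<lambda>_. 1) ** adj V)) \<psi>) \<le> 1"
    using assms by (simp add: diag_1 sandwich_id_tensor_isometry_le_1)
  thus ?thesis
    unfolding sandwich_id_tensor mtrace_mmult_adj_svd[OF K] unitary_conj_diag_cancel[OF U(1) V(1)]
      trace_norm_svd[OF U(1) V(1) K s]
    by (simp add: diag_def s sum_nonneg flip: of_real_sum)
qed

text \<open>Discarding the singular values \<open>s\<^sub>i \<le> \<eta>\<close> loses at most \<open>\<eta> n\<close> from \<open>\<Sigma> s\<^sub>i \<le> 1\<close>, hence at most
  \<open>2 \<eta> n\<close> from its square.\<close>
lemma sum_cutoff_sq_ge:
  fixes s :: "'n::finite \<Rightarrow> real"
  assumes "\<And>i. s i \<ge> 0" "\<eta> \<ge> 0" "(\<Sum>i\<in>UNIV. s i) \<le> 1"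
  shows "(\<Sum>i\<in>UNIV. if s i > \<eta> then s i else 0)\<^sup>2 \<ge> (\<Sum>i\<in>UNIV. s i)\<^sup>2 - 2 * \<eta> * real CARD('n)"
proof -
  define a where "a = (\<Sum>i\<in>UNIV. s i)"
  define b where "b = (\<Sum>i\<in>UNIV. if s i > \<eta> then s i else 0)"
  have "b \<ge> 0" "b \<le> a" unfolding a_def b_def using assms(1) by (auto intro!: sum_nonneg sum_mono)
  have "a - b = (\<Sum>i\<in>UNIV. s i - (if s i > \<eta> then s i else 0))"
    unfolding a_def b_def by (simp add: sum_subtractf)
  also have "\<dots> \<le> (\<Sum>i\<in>(UNIV::'n set). \<eta>)" by (rule sum_mono) (simp add: assms(2))
  finally have "a - b \<le> \<eta> * real CARD('n)" by (simp add: mult.commute)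
  hence "(a - b) * (a + b) \<le> (\<eta> * real CARD('n)) * (a + b)"
    using \<open>b \<ge> 0\<close> \<open>b \<le> a\<close> by (intro mult_right_mono) auto
  also have "\<dots> \<le> (\<eta> * real CARD('n)) * 2"
    using \<open>b \<le> a\<close> assms(2,3) unfolding a_def by (intro mult_left_mono) auto
  finally have "a\<^sup>2 - b\<^sup>2 \<le> 2 * \<eta> * real CARD('n)" by (simp add: power2_eq_square algebra_simps)
  thus ?thesis unfolding a_def b_def by simp
qed

lemma projector_vnorm2_split:
  assumes "projector P"
  shows "vnorm2 v = vnorm2 (mvec P v) + vnorm2 (\<lambda>i. v i - mvec P v i)"
proof -
  define p where "p = mvec P v"
  define r where "r = (\<lambda>i. v i - p i)"
  have "cinner p p = cinner v p" "cinner p v = cinner v p"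
    using assms cinner_mvec_mvec[of P v v] cinner_adj[of v P v]
    unfolding p_def projector_def by simp_all
  hence pr: "cinner p r = 0" unfolding r_def cinner_diff_right by simp
  hence "cinner r p = 0" using cinner_commute[of r p] by simp
  moreover have "v = (\<lambda>i. p i + 1 * r i)" unfolding r_def by simp
  ultimately have "cinner v v = cinner p p + cinner r r"
    using cinner_expand[of p 1 r p 1 r] pr by simp
  hence "complex_of_real (vnorm2 v) = complex_of_real (vnorm2 p + vnorm2 r)"
    unfolding cinner_self by simp
  thus ?thesis unfolding p_def r_def by (simp only: of_real_eq_iff)
qed

lemma projector_vnorm2_le: "projector P \<Longrightarrow> vnorm2 (mvec P v) \<le> vnorm2 v"
  using projector_vnorm2_split[of P v] vnorm2_nonneg[of "\<lambda>i. v i - mvec P v i"] by linarith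

lemma projector_fixes_of_vnorm2_eq:
  assumes "projector P" "vnorm2 (mvec P v) = vnorm2 v" shows "mvec P v = v"
proof -
  have "vnorm2 (\<lambda>i. v i - mvec P v i) = 0" using projector_vnorm2_split[OF assms(1), of v] assms(2) by simp
  thus ?thesis unfolding vnorm2_eq_0 by (simp add: fun_eq_iff)
qed

lemma partial_isometry_gram_projector:
  assumes "partial_isometry R" shows "projector (adj R ** R)"
proof -
  obtain Ut P where Ut: "isometry Ut" and P: "projector P" and R: "R = Ut ** P"
    using assms unfolding partial_isometry_def by blast
  have "adj R ** R = adj P ** (adj Ut ** Ut) ** P"
    unfolding R adj_mmult by (simp only: mmult_assoc)
  thus ?thesis using Ut P unfolding isometry_def projector_def by simp
qed

lemma vnorm2_mvec_gram_projector:
  assumes "projector (adj R ** R)"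
  shows "vnorm2 (mvec R x) = vnorm2 (mvec (adj R ** R) x)"
proof -
  have "cinner (mvec (adj R ** R) x) (mvec (adj R ** R) x) = cinner x (mvec (adj R ** R) x)"
    using assms unfolding cinner_mvec_mvec projector_def by simp
  hence "complex_of_real (vnorm2 (mvec R x)) = complex_of_real (vnorm2 (mvec (adj R ** R) x))"
    using cinner_mvec_mvec[of R x x] by (simp add: cinner_self)
  thus ?thesis by (simp only: of_real_eq_iff)
qed

lemma unitary_col_cinner_sq_le:
  fixes U :: "('n::finite,'n) cmat"
  assumes "U ** adj U = idm"
  shows "(cmod (cinner (\<lambda>k. U k i) y))\<^sup>2 \<le> vnorm2 y"
proof -
  have "(cmod (cinner (\<lambda>k. U k i) y))\<^sup>2 = (cmod (mvec (adj U) y i))\<^sup>2"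
    unfolding mvec_def adj_def cinner_def ..
  also have "\<dots> \<le> vnorm2 (mvec (adj U) y)" unfolding vnorm2_def by (rule member_le_sum) auto
  also have "\<dots> = vnorm2 y" using assms by (simp add: isometry_vnorm2)
  finally show ?thesis .
qed

text \<open>If a partial isometry \<open>R\<close> attains the trace norm, i.e.\ \<open>|\<Sigma> s\<^sub>i \<langle>u\<^sub>i, R v\<^sub>i\<rangle>| = \<Sigma> s\<^sub>i\<close>, then each
  \<open>|\<langle>u\<^sub>i, R v\<^sub>i\<rangle>| \<le> \<parallel>R\<^sup>\<dagger>R v\<^sub>i\<parallel> \<le> 1\<close> with \<open>s\<^sub>i > 0\<close> must equal \<open>1\<close>.\<close>
lemma svd_attained_gram_fixes:
  fixes U V R :: "('n::finite,'n) cmat"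
  assumes U: "U ** adj U = idm" and V: "adj V ** V = idm" and R: "partial_isometry R"
    and s: "\<And>i. s i \<ge> 0"
    and attained: "cmod (\<Sum>i\<in>UNIV. (adj U ** R ** V) i i * complex_of_real (s i)) = (\<Sum>i\<in>UNIV. s i)"
    and "s i > 0"
  shows "mvec (adj R ** R) (\<lambda>k. V k i) = (\<lambda>k. V k i)"
proof -
  define P where "P = adj R ** R"
  define v where "v i = (\<lambda>k. V k i)" for i
  define c where "c i = (adj U ** R ** V) i i" for i
  have P: "projector P" unfolding P_def by (rule partial_isometry_gram_projector[OF R])
  have vv: "vnorm2 (v i) = 1" for i
    using isometry_col_cinner[OF V, of i i] unfolding v_def cinner_self by simp
  have c2: "(cmod (c i))\<^sup>2 \<le> vnorm2 (mvec P (v i))" for i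
  proof -
    have "c i = cinner (\<lambda>k. U k i) (mvec R (v i))"
      unfolding c_def v_def mmult_assoc adj_mmult_cinner by (simp add: mmult_def mvec_def)
    thus ?thesis using unitary_col_cinner_sq_le[OF U, of i "mvec R (v i)"]
      unfolding vnorm2_mvec_gram_projector[OF P[unfolded P_def]] P_def by simp
  qed
  have c1: "cmod (c i) \<le> 1" for i
  proof -
    have "(cmod (c i))\<^sup>2 \<le> 1\<^sup>2" using c2[of i] projector_vnorm2_le[OF P, of "v i"] vv[of i] by simp
    thus ?thesis by (rule power2_le_imp_le) simp
  qed
  have "(\<Sum>i\<in>UNIV. s i) \<le> (\<Sum>i\<in>UNIV. cmod (c i) * s i)"
    using attained norm_sum[of "\<lambda>i. c i * complex_of_real (s i)" UNIV] s
    unfolding c_def by (simp add: norm_mult)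
  hence "(\<Sum>i\<in>UNIV. s i - cmod (c i) * s i) \<le> 0" by (simp add: sum_subtractf)
  moreover have nn: "0 \<le> s i - cmod (c i) * s i" for i
    using c1 s by (simp add: mult_left_le_one_le)
  ultimately have "(\<Sum>i\<in>UNIV. s i - cmod (c i) * s i) = 0"
    by (intro antisym sum_nonneg nn)
  hence "s i - cmod (c i) * s i = 0"
    using sum_nonneg_eq_0_iff[of UNIV "\<lambda>i. s i - cmod (c i) * s i"] nn by simp
  hence "cmod (c i) = 1" using \<open>s i > 0\<close> by simp
  hence "vnorm2 (mvec P (v i)) = vnorm2 (v i)"
    using c2[of i] projector_vnorm2_le[OF P, of "v i"] vv[of i] by simp
  thus ?thesis using projector_fixes_of_vnorm2_eq[OF P] unfolding P_def v_def by simp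
qed

lemma psd_le_conj_diag_projector:
  fixes V :: "('n::finite,'n) cmat"
  assumes V: "V ** adj V = idm" and P: "projector P"
    and p: "\<And>i. 0 \<le> p i \<and> p i \<le> 1"
    and fixed: "\<And>i. p i \<noteq> 0 \<Longrightarrow> mvec P (\<lambda>k. V k i) = (\<lambda>k. V k i)"
  shows "psd_le (V ** diag p ** adj V) P"
  unfolding psd_le_def psd_iff
proof
  fix w :: "'n \<Rightarrow> complex"
  define y where "y = mvec (adj V) w"
  define y' where "y' = mvec (adj V) (mvec P w)"
  have hP: "adj P = P" and PP: "P ** P = P" using P unfolding projector_def by auto
  have "cinner w (mvec (V ** diag p ** adj V) w) = cinner y (mvec (diag p) y)"
    unfolding y_def mvec_mmult cinner_adj ..
  hence q: "cinner w (mvec (V ** diag p ** adj V) w) = complex_of_real (\<Sum>k\<in>UNIV. p k * (cmod (y k))\<^sup>2)"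
    unfolding cinner_diag .
  have "p k * (cmod (y k))\<^sup>2 \<le> (cmod (y' k))\<^sup>2" for k
  proof (cases "p k = 0")
    case False
    have "y k = cinner (mvec P (\<lambda>i. V i k)) w"
      unfolding y_def fixed[OF False] by (simp add: mvec_def adj_def cinner_def)
    also have "\<dots> = y' k"
      unfolding y'_def hermitian_cinner[OF hP, symmetric] by (simp add: mvec_def adj_def cinner_def)
    finally show ?thesis using p[of k] by (simp add: mult_left_le_one_le)
  qed simp
  hence "(\<Sum>k\<in>UNIV. p k * (cmod (y k))\<^sup>2) \<le> vnorm2 y'"
    unfolding vnorm2_def by (rule sum_mono)
  also have "\<dots> = vnorm2 (mvec P w)" unfolding y'_def by (rule isometry_vnorm2) (simp add: V)
  finally have "(\<Sum>k\<in>UNIV. p k * (cmod (y k))\<^sup>2) \<le> vnorm2 (mvec P w)" .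
  moreover have "cinner w (mvec P w) = complex_of_real (vnorm2 (mvec P w))"
    using cinner_mvec_mvec[of P w w] unfolding hP PP cinner_self by simp
  ultimately show "Im (cinner w (mvec (\<lambda>i j. P i j - (V ** diag p ** adj V) i j) w)) = 0 \<and>
      0 \<le> Re (cinner w (mvec (\<lambda>i j. P i j - (V ** diag p ** adj V) i j) w))"
    unfolding mvec_diff cinner_diff_right q by simp
qed

lemma psd_le_gram_cutoff_of_attaining:
  fixes U V R :: "('n::finite,'n) cmat"
  assumes U: "adj U ** U = idm" "U ** adj U = idm" and V: "adj V ** V = idm" "V ** adj V = idm"
    and s: "\<And>i. s i \<ge> 0" and "\<eta> \<ge> 0" and R: "partial_isometry R"
    and attained: "cmod (\<Sum>i\<in>UNIV. (adj U ** R ** V) i i * complex_of_real (s i)) = (\<Sum>i\<in>UNIV. s i)"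
  defines "W \<equiv> U ** diag (\<lambda>i. if s i > \<eta> then 1 else 0) ** adj V"
  shows "psd_le (adj W ** W) (adj R ** R)"
proof -
  define p where "p i = (if s i > \<eta> then 1 else (0::real))" for i
  have W: "W = U ** diag p ** adj V" unfolding W_def p_def ..
  have "diag p ** diag p = diag p"
    unfolding diag_mmult_diag p_def by (rule arg_cong[where f=diag]) auto
  moreover have "adj W ** W = V ** (diag p ** (adj U ** U) ** diag p) ** adj V"
    unfolding W adj_mmult adj_adj adj_diag by (simp only: mmult_assoc)
  ultimately have WW: "adj W ** W = V ** diag p ** adj V" unfolding U(1) mmult_idm by simp
  have "mvec (adj R ** R) (\<lambda>k. V k i) = (\<lambda>k. V k i)" if "p i \<noteq> 0" for i
    using svd_attained_gram_fixes[OF U(2) V(1) R s attained] that \<open>\<eta> \<ge> 0\<close>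
    unfolding p_def by (simp split: if_splits)
  hence "psd_le (V ** diag p ** adj V) (adj R ** R)"
    by (intro psd_le_conj_diag_projector[OF V(2) partial_isometry_gram_projector[OF R]])
       (auto simp: p_def)
  thus ?thesis unfolding WW .
qed

theorem mainTheorem1:
  fixes \<psi> \<phi> :: "'a::finite \<times> 'b::finite \<Rightarrow> complex" and \<eta> :: real
  assumes "pure_state \<psi>" and "pure_state \<phi>" and "\<eta> \<ge> 0"
  defines "\<rho> \<equiv> ptrace_B (ketbra \<psi> \<psi>)"
      and "\<sigma> \<equiv> ptrace_B (ketbra \<phi> \<phi>)"
      and "W \<equiv> sgn_eta \<eta> (ptrace_A (ketbra \<phi> \<psi>))"
  shows "partial_isometry W
    \<and> (cmod (sandwich \<phi> (id_tensor W) \<psi>))\<^sup>2 \<ge> fidelity \<rho> \<sigma> - 2 * \<eta> * real (card (UNIV :: 'b set))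
    \<and> (\<forall>R :: ('b, 'b) cmat. partial_isometry R \<and> fidelity \<rho> \<sigma> = (cmod (sandwich \<phi> (id_tensor R) \<psi>))\<^sup>2
           \<longrightarrow> psd_le (adj W ** W) (adj R ** R))"
proof -
  define K where "K = ptrace_A (ketbra \<phi> \<psi>)"
  obtain U V :: "('b,'b) cmat" and s where U: "adj U ** U = idm" "U ** adj U = idm"
    and V: "adj V ** V = idm" "V ** adj V = idm" and s: "\<And>i. s i \<ge> 0"
    and K: "K = U ** diag s ** adj V"
    and W: "W = U ** diag (\<lambda>i. if s i > \<eta> then 1 else 0) ** adj V"
    using sgn_eta_svd[of K] unfolding W_def K_def[symmetric] by metis
  have sandwich_svd: "sandwich \<phi> (id_tensor R) \<psi> = (\<Sum>i\<in>UNIV. (adj U ** R ** V) i i * complex_of_real (s i))"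
    for R unfolding sandwich_id_tensor K_def[symmetric] by (rule mtrace_mmult_adj_svd[OF K])
  have trace_norm_K: "trace_norm K = (\<Sum>i\<in>UNIV. s i)" by (rule trace_norm_svd[OF U(1) V(1) K s])
  have F: "fidelity \<rho> \<sigma> = (\<Sum>i\<in>UNIV. s i)\<^sup>2"
    unfolding \<rho>_def \<sigma>_def fidelity_ptrace_B K_def[symmetric] trace_norm_K ..
  have W_sandwich: "sandwich \<phi> (id_tensor W) \<psi> = complex_of_real (\<Sum>i\<in>UNIV. if s i > \<eta> then s i else 0)"
    unfolding sandwich_svd W unitary_conj_diag_cancel[OF U(1) V(1)] of_real_sum
    by (intro sum.cong) (auto simp: diag_def)
  have "(\<Sum>i\<in>UNIV. s i) \<le> 1"
    using trace_norm_ptrace_A_le_1[OF assms(1,2)] unfolding K_def[symmetric] trace_norm_K .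
  hence "(cmod (sandwich \<phi> (id_tensor W) \<psi>))\<^sup>2 \<ge> fidelity \<rho> \<sigma> - 2 * \<eta> * real CARD('b)"
    unfolding F W_sandwich norm_of_real power2_abs using sum_cutoff_sq_ge[of s \<eta>, OF s assms(3)] by simp
  moreover have "psd_le (adj W ** W) (adj R ** R)"
    if "partial_isometry R" "fidelity \<rho> \<sigma> = (cmod (sandwich \<phi> (id_tensor R) \<psi>))\<^sup>2" for R
    using that(2) unfolding W F sandwich_svd
    by (intro psd_le_gram_cutoff_of_attaining[OF U V s assms(3) that(1)])
       (simp add: power2_eq_iff_nonneg s sum_nonneg)
  ultimately show ?thesis
    using partial_isometry_conj_diag_indicator[OF U(1) V] unfolding W by simp
qed

end
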